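(* Let $\mathit{HWQ}$ be the Herlihy\&Wing queue described in the context, with the dequeue linearization point $lin(deq,d,k)$ emitted exactly when a dequeue $k$ executes a $\mathtt{swap}$ returning a non-null value $d$. Then there exists a $(C\cup R\cup Lin(deq))$-forward simulation from $\mathit{HWQ}$ to $AbsQ$; consequently $\mathit{HWQ}$ is a $(C\cup R\cup Lin(deq))$-refinement of $AbsQ_0$, and in particular refines (is linearizable with respect to) $AbsQ_0$.
   Context: $\mathit{HWQ}$ is the queue implementation (methods $enq$, $deq$; values $\mathbb{N}\cup\{\mathtt{EMPTY}\}$, no value enqueued twice) whose shared state is an unbounded array $\mathtt{items}$ (all entries initially $\mathtt{null}$) and an integer counter $\mathtt{back}$ (initially $0$), executed by arbitrarily many concurrent operations, each statement being atomic. $enq(x)$: $\mathtt{i} := \mathtt{back}$; $\mathtt{back}:=\mathtt{back}+1$ (one atomic step); then $\mathtt{items[i]} := x$; return. $deq()$: repeat forever: $\mathtt{range}:=\mathtt{back}-1$; for $\mathtt{i}=0,\dots,\mathtt{range}$: $\mathtt{x}:=\mathtt{swap}(\mathtt{items[i]},\mathtt{null})$ (atomically read $\mathtt{items[i]}$ into $\mathtt{x}$ and set it to $\mathtt{null}$); if $\mathtt{x}\ne\mathtt{null}$ return $\mathtt{x}$. It is viewed as an LTS whose labels are call/return actions, $lin(deq,d,k)$ actions as stated, and internal (non-observable) actions for all other steps. Call actions $inv(m,d,k)$ and return actions $ret(m,d,k)$ form sets $C,R$; $Lin(deq)=\{lin(deq,d,k)\}$; traces of an LTS are label sequences of finite executions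 from the initial state and $Tr(A)|\Gamma$ their projections onto $\Gamma$. A $\Gamma$-refinement of $L_2$ by $L_1$ means $Tr(L_1)|\Gamma\subseteq Tr(L_2)|\Gamma$; refinement means $H(L_1)\subseteq H(L_2)$ with $H$ the projections of traces onto $C\cup R$. A $\Gamma$-forward simulation from $L_1$ to $L_2$ (with $C\cup R\subseteq\Gamma\subseteq\Sigma_1\cap\Sigma_2$) is a relation $fs$ between states with $fs[s^1_0]=\{s^2_0\}$ such that every $L_1$-step $s\xrightarrow{\gamma}s'$ with $\gamma\in\Gamma$ and $u\in fs[s]$ is matched by $u\xrightarrow{\sigma}u'$ with $u'\in fs[s']$, $\sigma$ containing $\gamma$ exactly once and otherwise only labels in $\Sigma_2\setminus\Gamma$; and every step with label $e\notin\Gamma$ is matched by $u\xrightarrow{\sigma}u'$, $u'\in fs[s']$, $\sigma\in(\Sigma_2\setminus\Gamma)^*$. $AbsQ_0$: states $(\sigma,in,rv,cp)$; $inv(enq,d,k)$: $in(k)=d,cp(k)=A_1$; $lin(enq,d,k)$ ($cp(k)=A_1$, $in(k)=d$): $\sigma:=d\cdot\sigma$, $cp(k)=A$; $ret(enq,k)$ ($cp(k)=A$): $cp(k)=A_2$; $inv(deq,k)$: $cp(k)=R_1$; $lin(deq,d,k)$ ($cp(k)=R_1$, $\sigma=\sigma'\cdot d$): $\sigma:=\sigma'$, $rv(k)=d$, $cp(k)=R_2$; $lin(deq,\mathtt{EMPTY},k)$ ($cp(k)=R_1,\sigma=\epsilon$): $rv(k)=\mathtt{EMPTY}$, $cp(k)=R_2$;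 $ret(deq,d,k)$ ($cp(k)=R_2,rv(k)=d$): $cp(k)=R_3$; calls require $k\notin dom(cp)$ and enqueued values $\ne\mathtt{EMPTY}$. $AbsQ$: alphabet $C\cup R\cup Lin(deq)$; states $(O,<,\ell,rv,cp)$, $O\subseteq\mathbb{N}$, $<$ strict partial order on $O$, $\ell:O\to\mathit{Vals}\times\{\mathtt{PEND},\mathtt{COMP}\}$, $rv,cp$ partial functions; initially all empty. $inv(enq,d,k)$ ($k\notin dom(cp)$, $d\ne\mathtt{EMPTY}$): add $k$ to $O$ ordered after every $k''\in O$ with $\ell_2(k'')=\mathtt{COMP}$, $\ell(k)=(d,\mathtt{PEND})$, $cp(k)=A_1$; $ret(enq,k)$ ($cp(k)=A_1$): if $k\in O$ change its flag to $\mathtt{COMP}$; set $cp(k)=A_2$; $inv(deq,k)$: $cp(k)=R_1$; $lin(deq,d,k)$ ($cp(k)=R_1$, $d\ne\mathtt{EMPTY}$, some $<$-minimal $k'\in O$ has $\ell_1(k')=d$): remove $k'$ from $O$ and from $<$, $rv(k)=d$, $cp(k)=R_2$; $lin(deq,\mathtt{EMPTY},k)$ ($cp(k)=R_1$, every $o\in O$ flagged $\mathtt{PEND}$): $rv(k)=\mathtt{EMPTY}$, $cp(k)=R_2$; $ret(deq,d,k)$ ($cp(k)=R_2$, $rv(k)=d$): $cp(k)=R_3$. *)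

theory Defs
  imports Main
begin

datatype val = Val nat | EMPTY

datatype act =
    InvEnq val nat
  | InvDeq nat
  | RetEnq nat
  | RetDeq val nat
  | LinEnq val nat
  | LinDeq val nat
  | Tau

definition Calls :: "act set" where
  "Calls = {a. \<exists>d k. a = InvEnq d k} \<union> {a. \<exists>k. a = InvDeq k}"

definition Rets :: "act set" where
  "Rets = {a. \<exists>k. a = RetEnq k} \<union> {a. \<exists>d k. a = RetDeq d k}"

definition LinDeqs :: "act set" where
  "LinDeqs = {a. \<exists>d k. a = LinDeq d k}"

definition LinEnqs :: "act set" where
  "LinEnqs = {a. \<exists>d k. a = LinEnq d k}"

record ('s, 'l) lts =
  init  :: 's
  alpha :: "'l set"
  trans :: "'s \<Rightarrow> 'l \<Rightarrow> 's \<Rightarrow> bool"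

inductive steps :: "('s, 'l) lts \<Rightarrow> 's \<Rightarrow> 'l list \<Rightarrow> 's \<Rightarrow> bool" for L where
  steps_nil:  "steps L s [] s"
| steps_cons: "trans L s a s' \<Longrightarrow> steps L s' w s'' \<Longrightarrow> steps L s (a # w) s''"

definition traces :: "('s, 'l) lts \<Rightarrow> 'l list set" where
  "traces L = {w. \<exists>s. steps L (init L) w s}"

definition proj :: "'l set \<Rightarrow> 'l list \<Rightarrow> 'l list" where
  "proj G w = filter (\<lambda>a. a \<in> G) w"

definition proj_traces :: "('s, 'l) lts \<Rightarrow> 'l set \<Rightarrow> 'l list set" where
  "proj_traces L G = proj G ` traces L"

definition gamma_refines :: "'l set \<Rightarrow> ('s1, 'l) lts \<Rightarrow> ('s2, 'l) lts \<Rightarrow> bool" where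
  "gamma_refines G L1 L2 \<longleftrightarrow> proj_traces L1 G \<subseteq> proj_traces L2 G"

definition refines :: "('s1, act) lts \<Rightarrow> ('s2, act) lts \<Rightarrow> bool" where
  "refines L1 L2 \<longleftrightarrow> proj_traces L1 (Calls \<union> Rets) \<subseteq> proj_traces L2 (Calls \<union> Rets)"

definition is_fwd_sim ::
  "act set \<Rightarrow> ('s1, act) lts \<Rightarrow> ('s2, act) lts \<Rightarrow> ('s1 \<Rightarrow> 's2 \<Rightarrow> bool) \<Rightarrow> bool" where
  "is_fwd_sim G L1 L2 fs \<longleftrightarrow>
     Calls \<union> Rets \<subseteq> G \<and> G \<subseteq> alpha L1 \<inter> alpha L2 \<and>
     {u. fs (init L1) u} = {init L2} \<and>
     (\<forall>s g s' u. trans L1 s g s' \<and> g \<in> G \<and> fs s u \<longrightarrow>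
        (\<exists>u' w1 w2. steps L2 u (w1 @ [g] @ w2) u' \<and> fs s' u' \<and>
           set w1 \<subseteq> alpha L2 - G \<and> set w2 \<subseteq> alpha L2 - G)) \<and>
     (\<forall>s e s' u. trans L1 s e s' \<and> e \<notin> G \<and> fs s u \<longrightarrow>
        (\<exists>u' w. steps L2 u w u' \<and> fs s' u' \<and> set w \<subseteq> alpha L2 - G))"

text \<open>Local control state of an operation k:
  E1 x: enq(x) invoked, about to do i := back; back := back + 1;
  E2 x i: about to do items[i] := x;  E3: about to return;
  DStart: deq at the head of its outer loop, about to read range := back - 1;
  DLoop n i: deq in its inner loop with n = range + 1 (the read value of back),
    about to swap items[i] if i < n, otherwise about to restart the outer loop;
  DRet x: swap returned x, about to return x;  Done: operation has returned.\<close>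
datatype hpc = E1 nat | E2 nat nat | E3 | DStart | DLoop nat nat | DRet nat | Done

record hstate =
  items :: "nat \<Rightarrow> nat option"
  hback  :: nat
  pc    :: "nat \<Rightarrow> hpc option"
  used  :: "nat set"

definition hwq_init :: hstate where
  "hwq_init = \<lparr>items = (\<lambda>_. None), hback = 0, pc = (\<lambda>_. None), used = {}\<rparr>"

fun hwq_step :: "hstate \<Rightarrow> act \<Rightarrow> hstate \<Rightarrow> bool" where
  "hwq_step s (InvEnq d k) s' \<longleftrightarrow>
     pc s k = None \<and>
     (\<exists>x. d = Val x \<and> x \<notin> used s \<and>
          s' = s\<lparr>pc := (pc s)(k \<mapsto> E1 x), used := insert x (used s)\<rparr>)"
| "hwq_step s (InvDeq k) s' \<longleftrightarrow>
     pc s k = None \<and> s' = s\<lparr>pc := (pc s)(k \<mapsto> DStart)\<rparr>"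
| "hwq_step s (RetEnq k) s' \<longleftrightarrow>
     pc s k = Some E3 \<and> s' = s\<lparr>pc := (pc s)(k \<mapsto> Done)\<rparr>"
| "hwq_step s (RetDeq d k) s' \<longleftrightarrow>
     (\<exists>x. pc s k = Some (DRet x) \<and> d = Val x \<and> s' = s\<lparr>pc := (pc s)(k \<mapsto> Done)\<rparr>)"
| "hwq_step s (LinEnq d k) s' \<longleftrightarrow> False"
| "hwq_step s (LinDeq d k) s' \<longleftrightarrow>
     (\<exists>n i x. pc s k = Some (DLoop n i) \<and> i < n \<and> items s i = Some x \<and> d = Val x \<and>
        s' = s\<lparr>items := (items s)(i := None), pc := (pc s)(k \<mapsto> DRet x)\<rparr>)"
| "hwq_step s Tau s' \<longleftrightarrow>
     (\<exists>k.
        (\<exists>x. pc s k = Some (E1 x) \<and>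
             s' = s\<lparr>hback := Suc (hback s), pc := (pc s)(k \<mapsto> E2 x (hback s))\<rparr>)
      \<or> (\<exists>x i. pc s k = Some (E2 x i) \<and>
             s' = s\<lparr>items := (items s)(i \<mapsto> x), pc := (pc s)(k \<mapsto> E3)\<rparr>)
      \<or> (pc s k = Some DStart \<and> s' = s\<lparr>pc := (pc s)(k \<mapsto> DLoop (hback s) 0)\<rparr>)
      \<or> (\<exists>n i. pc s k = Some (DLoop n i) \<and> i < n \<and> items s i = None \<and>
             s' = s\<lparr>pc := (pc s)(k \<mapsto> DLoop n (Suc i))\<rparr>)
      \<or> (\<exists>n i. pc s k = Some (DLoop n i) \<and> n \<le> i \<and>
             s' = s\<lparr>pc := (pc s)(k \<mapsto> DStart)\<rparr>))"

definition HWQ :: "(hstate, act) lts" where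
  "HWQ = \<lparr>init = hwq_init, alpha = Calls \<union> Rets \<union> LinDeqs \<union> {Tau}, trans = hwq_step\<rparr>"

datatype cpc = A1 | A | A2 | R1 | R2 | R3

record q0state =
  q :: "val list"
  qin :: "nat \<Rightarrow> val option"
  qrv :: "nat \<Rightarrow> val option"
  qcp :: "nat \<Rightarrow> cpc option"

definition absq0_init :: q0state where
  "absq0_init = \<lparr>q = [], qin = (\<lambda>_. None), qrv = (\<lambda>_. None), qcp = (\<lambda>_. None)\<rparr>"

fun absq0_step :: "q0state \<Rightarrow> act \<Rightarrow> q0state \<Rightarrow> bool" where
  "absq0_step s (InvEnq d k) s' \<longleftrightarrow>
     k \<notin> dom (qcp s) \<and> d \<noteq> EMPTY \<and>
     s' = s\<lparr>qin := (qin s)(k \<mapsto> d), qcp := (qcp s)(k \<mapsto> A1)\<rparr>"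
| "absq0_step s (LinEnq d k) s' \<longleftrightarrow>
     qcp s k = Some A1 \<and> qin s k = Some d \<and>
     s' = s\<lparr>q := d # q s, qcp := (qcp s)(k \<mapsto> A)\<rparr>"
| "absq0_step s (RetEnq k) s' \<longleftrightarrow>
     qcp s k = Some A \<and> s' = s\<lparr>qcp := (qcp s)(k \<mapsto> A2)\<rparr>"
| "absq0_step s (InvDeq k) s' \<longleftrightarrow>
     k \<notin> dom (qcp s) \<and> s' = s\<lparr>qcp := (qcp s)(k \<mapsto> R1)\<rparr>"
| "absq0_step s (LinDeq d k) s' \<longleftrightarrow>
     qcp s k = Some R1 \<and>
     ((\<exists>\<sigma>'. q s = \<sigma>' @ [d] \<and>
          s' = s\<lparr>q := \<sigma>', qrv := (qrv s)(k \<mapsto> d), qcp := (qcp s)(k \<mapsto> R2)\<rparr>)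
      \<or> (d = EMPTY \<and> q s = [] \<and>
          s' = s\<lparr>qrv := (qrv s)(k \<mapsto> EMPTY), qcp := (qcp s)(k \<mapsto> R2)\<rparr>))"
| "absq0_step s (RetDeq d k) s' \<longleftrightarrow>
     qcp s k = Some R2 \<and> qrv s k = Some d \<and> s' = s\<lparr>qcp := (qcp s)(k \<mapsto> R3)\<rparr>"
| "absq0_step s Tau s' \<longleftrightarrow> False"

definition AbsQ0 :: "(q0state, act) lts" where
  "AbsQ0 = \<lparr>init = absq0_init, alpha = Calls \<union> Rets \<union> LinEnqs \<union> LinDeqs, trans = absq0_step\<rparr>"

datatype flag = PEND | COMP

text \<open>aord is the strict partial order <, as a set of pairs: (a, b) \<in> aord means a < b.
  alab is the labelling function on O (partial; None outside O).\<close>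
record aqstate =
  aO   :: "nat set"
  aord :: "(nat \<times> nat) set"
  alab :: "nat \<Rightarrow> (val \<times> flag) option"
  arv  :: "nat \<Rightarrow> val option"
  acp  :: "nat \<Rightarrow> cpc option"

definition absq_init :: aqstate where
  "absq_init = \<lparr>aO = {}, aord = {}, alab = (\<lambda>_. None), arv = (\<lambda>_. None), acp = (\<lambda>_. None)\<rparr>"

fun absq_step :: "aqstate \<Rightarrow> act \<Rightarrow> aqstate \<Rightarrow> bool" where
  "absq_step s (InvEnq d k) s' \<longleftrightarrow>
     k \<notin> dom (acp s) \<and> d \<noteq> EMPTY \<and>
     s' = s\<lparr>aO := insert k (aO s),
            aord := aord s \<union> {(k'', k) | k'' v. k'' \<in> aO s \<and> alab s k'' = Some (v, COMP)},
            alab := (alab s)(k \<mapsto> (d, PEND)),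
            acp := (acp s)(k \<mapsto> A1)\<rparr>"
| "absq_step s (RetEnq k) s' \<longleftrightarrow>
     acp s k = Some A1 \<and>
     s' = s\<lparr>alab := (if k \<in> aO s then (alab s)(k \<mapsto> (fst (the (alab s k)), COMP)) else alab s),
            acp := (acp s)(k \<mapsto> A2)\<rparr>"
| "absq_step s (InvDeq k) s' \<longleftrightarrow>
     k \<notin> dom (acp s) \<and> s' = s\<lparr>acp := (acp s)(k \<mapsto> R1)\<rparr>"
| "absq_step s (LinDeq d k) s' \<longleftrightarrow>
     acp s k = Some R1 \<and>
     ((d \<noteq> EMPTY \<and>
        (\<exists>k' f. k' \<in> aO s \<and> (\<forall>k''\<in>aO s. (k'', k') \<notin> aord s) \<and> alab s k' = Some (d, f) \<and>
           s' = s\<lparr>aO := aO s - {k'},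
                  aord := {(a, b). (a, b) \<in> aord s \<and> a \<noteq> k' \<and> b \<noteq> k'},
                  alab := (alab s)(k' := None),
                  arv := (arv s)(k \<mapsto> d),
                  acp := (acp s)(k \<mapsto> R2)\<rparr>))
      \<or> (d = EMPTY \<and> (\<forall>j\<in>aO s. \<exists>v. alab s j = Some (v, PEND)) \<and>
          s' = s\<lparr>arv := (arv s)(k \<mapsto> EMPTY), acp := (acp s)(k \<mapsto> R2)\<rparr>))"
| "absq_step s (RetDeq d k) s' \<longleftrightarrow>
     acp s k = Some R2 \<and> arv s k = Some d \<and> s' = s\<lparr>acp := (acp s)(k \<mapsto> R3)\<rparr>"
| "absq_step s (LinEnq d k) s' \<longleftrightarrow> False"
| "absq_step s Tau s' \<longleftrightarrow> False"

definition AbsQ :: "(aqstate, act) lts" where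
  "AbsQ = \<lparr>init = absq_init, alpha = Calls \<union> Rets \<union> LinDeqs, trans = absq_step\<rparr>"

end

theory Submission
  imports Defs
begin

text \<open>
  Forward simulation into AbsQ: every enqueue enters the partial order O when it is invoked,
  after exactly the enqueues that have already returned, and a dequeue linearizes at its
  successful swap.  The simulation relation remembers the array slot claimed by each enqueue.
  The crucial invariant is that a dequeue scanning the array has already passed the slots of
  all order-predecessors of any enqueue whose slot lies in its scan range; hence the value it
  swaps out belongs to an order-minimal enqueue.

  From AbsQ to the atomic queue AbsQ0 we argue backwards along an AbsQ run (without dequeues
  returning EMPTY, which HWQ never emits): an AbsQ state is represented by an AbsQ0 state whose
  queue lists some members of O, including all completed ones, in an order compatible with
  the partial order.  Pending enqueues are linearized lazily, only when the list chosen for the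
  successor state requires it.
\<close>

abbreviation visible :: "act set" where
  "visible \<equiv> Calls \<union> Rets \<union> LinDeqs"

lemma trans_HWQ [simp]: "trans HWQ = hwq_step"
  by (simp add: HWQ_def)

lemma trans_AbsQ [simp]: "trans AbsQ = absq_step"
  by (simp add: AbsQ_def)

lemma trans_AbsQ0 [simp]: "trans AbsQ0 = absq0_step"
  by (simp add: AbsQ0_def)

lemma steps_single: "trans L s a s' \<Longrightarrow> steps L s [a] s'"
  by (auto intro: steps.intros)

lemma steps_append: "steps L s w1 s' \<Longrightarrow> steps L s' w2 s'' \<Longrightarrow> steps L s (w1 @ w2) s''"
  by (induction rule: steps.induct) (auto intro: steps.intros)

lemma proj_Nil [simp]: "proj G [] = []"
  by (simp add: proj_def)

lemma proj_append [simp]: "proj G (w1 @ w2) = proj G w1 @ proj G w2"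
  by (simp add: proj_def)

lemma proj_Cons [simp]: "proj G (a # w) = (if a \<in> G then a # proj G w else proj G w)"
  by (simp add: proj_def)

lemma proj_hidden: "set w \<subseteq> X - G \<Longrightarrow> proj G w = []"
  by (auto simp: proj_def filter_empty_conv)

lemma proj_proj: "G \<subseteq> G' \<Longrightarrow> proj G (proj G' w) = proj G w"
  unfolding proj_def by (auto simp: filter_filter intro: filter_cong)

lemma is_fwd_sim_visibleD:
  assumes "is_fwd_sim G L1 L2 fs" "trans L1 s g s'" "g \<in> G" "fs s u"
  obtains u' w1 w2 where "steps L2 u (w1 @ [g] @ w2) u'" "fs s' u'"
    "set w1 \<subseteq> alpha L2 - G" "set w2 \<subseteq> alpha L2 - G"
proof -
  have "\<forall>s g s' u. trans L1 s g s' \<and> g \<in> G \<and> fs s u \<longrightarrow>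
        (\<exists>u' w1 w2. steps L2 u (w1 @ [g] @ w2) u' \<and> fs s' u' \<and>
           set w1 \<subseteq> alpha L2 - G \<and> set w2 \<subseteq> alpha L2 - G)"
    using assms(1) unfolding is_fwd_sim_def by (elim conjE)
  then show ?thesis using assms(2-4) that by blast
qed

lemma is_fwd_sim_hiddenD:
  assumes "is_fwd_sim G L1 L2 fs" "trans L1 s e s'" "e \<notin> G" "fs s u"
  obtains u' w where "steps L2 u w u'" "fs s' u'" "set w \<subseteq> alpha L2 - G"
proof -
  have "\<forall>s e s' u. trans L1 s e s' \<and> e \<notin> G \<and> fs s u \<longrightarrow>
        (\<exists>u' w. steps L2 u w u' \<and> fs s' u' \<and> set w \<subseteq> alpha L2 - G)"
    using assms(1) unfolding is_fwd_sim_def by (elim conjE)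
  then show ?thesis using assms(2-4) that by blast
qed

lemma is_fwd_sim_steps:
  assumes sim: "is_fwd_sim G L1 L2 fs"
  shows "steps L1 s w s' \<Longrightarrow> fs s u \<Longrightarrow> \<exists>u' w'. steps L2 u w' u' \<and> fs s' u' \<and> proj G w' = proj G w"
proof (induction arbitrary: u rule: steps.induct)
  case (steps_nil s)
  then show ?case by (blast intro: steps.steps_nil)
next
  case (steps_cons s a s1 w s'')
  obtain u1 w1 where run1: "steps L2 u w1 u1" and rel1: "fs s1 u1" and proj1: "proj G w1 = proj G [a]"
  proof (cases "a \<in> G")
    case True
    obtain u1 w1 w2 where "steps L2 u (w1 @ [a] @ w2) u1" "fs s1 u1"
      "set w1 \<subseteq> alpha L2 - G" "set w2 \<subseteq> alpha L2 - G"
      using is_fwd_sim_visibleD[OF sim steps_cons.hyps(1) True steps_cons.prems] .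
    then show ?thesis using that[of "w1 @ [a] @ w2"] by (simp add: proj_hidden)
  next
    case False
    obtain u1 w1 where "steps L2 u w1 u1" "fs s1 u1" "set w1 \<subseteq> alpha L2 - G"
      using is_fwd_sim_hiddenD[OF sim steps_cons.hyps(1) False steps_cons.prems] .
    then show ?thesis using that[of w1] False by (simp add: proj_hidden)
  qed
  obtain u' w' where "steps L2 u1 w' u'" "fs s'' u'" "proj G w' = proj G w"
    using steps_cons.IH[OF rel1] by blast
  with run1 proj1 show ?case by (intro exI[of _ u'] exI[of _ "w1 @ w'"]) (auto intro: steps_append)
qed

lemma is_fwd_sim_gamma_refines:
  assumes "is_fwd_sim G L1 L2 fs"
  shows "gamma_refines G L1 L2"
  unfolding gamma_refines_def proj_traces_def traces_def
proof clarify
  fix w s assume "steps L1 (init L1) w s"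
  moreover have "fs (init L1) (init L2)"
    using assms unfolding is_fwd_sim_def by blast
  ultimately obtain u' w' where "steps L2 (init L2) w' u'" "proj G w' = proj G w"
    using is_fwd_sim_steps[OF assms] by blast
  then show "proj G w \<in> proj G ` {w. \<exists>s. steps L2 (init L2) w s}"
    by (intro image_eqI[of _ _ w']) auto
qed

lemma gamma_refines_refines:
  assumes "Calls \<union> Rets \<subseteq> G" "gamma_refines G L1 L2"
  shows "refines L1 L2"
proof -
  have "proj (Calls \<union> Rets) ` traces L1 = proj (Calls \<union> Rets) ` proj G ` traces L1"
    using proj_proj[OF assms(1)] by (simp add: image_image)
  also have "\<dots> \<subseteq> proj (Calls \<union> Rets) ` proj G ` traces L2"
    using assms(2) unfolding gamma_refines_def proj_traces_def by (rule image_mono)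
  also have "\<dots> = proj (Calls \<union> Rets) ` traces L2"
    using proj_proj[OF assms(1)] by (simp add: image_image)
  finally show ?thesis unfolding refines_def proj_traces_def .
qed

definition sim_idle :: "hstate \<Rightarrow> aqstate \<Rightarrow> bool" where
  "sim_idle s u \<longleftrightarrow> (\<forall>k. pc s k = None \<longleftrightarrow> acp u k = None)"

definition sim_unassigned :: "hstate \<Rightarrow> aqstate \<Rightarrow> bool" where
  "sim_unassigned s u \<longleftrightarrow>
     (\<forall>k x. pc s k = Some (E1 x) \<longrightarrow> acp u k = Some A1 \<and> k \<in> aO u \<and> alab u k = Some (Val x, PEND))"

definition sim_assigned :: "hstate \<Rightarrow> aqstate \<Rightarrow> (nat \<Rightarrow> nat) \<Rightarrow> bool" where
  "sim_assigned s u slot \<longleftrightarrow>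
     (\<forall>k x i. pc s k = Some (E2 x i) \<longrightarrow>
        acp u k = Some A1 \<and> k \<in> aO u \<and> alab u k = Some (Val x, PEND) \<and> slot k = i \<and> i < hback s)"

definition sim_written :: "hstate \<Rightarrow> aqstate \<Rightarrow> (nat \<Rightarrow> nat) \<Rightarrow> bool" where
  "sim_written s u slot \<longleftrightarrow>
     (\<forall>k. pc s k = Some E3 \<longrightarrow> acp u k = Some A1 \<and>
        (k \<in> aO u \<longrightarrow> (\<exists>x. alab u k = Some (Val x, PEND) \<and> items s (slot k) = Some x \<and> slot k < hback s)))"

definition sim_done :: "hstate \<Rightarrow> aqstate \<Rightarrow> (nat \<Rightarrow> nat) \<Rightarrow> bool" where
  "sim_done s u slot \<longleftrightarrow>
     (\<forall>k. pc s k = Some Done \<longrightarrow> (acp u k = Some A2 \<or> acp u k = Some R3) \<and>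
        (k \<in> aO u \<longrightarrow> (\<exists>x. alab u k = Some (Val x, COMP) \<and> items s (slot k) = Some x \<and> slot k < hback s)))"

definition sim_deq_start :: "hstate \<Rightarrow> aqstate \<Rightarrow> bool" where
  "sim_deq_start s u \<longleftrightarrow> (\<forall>k. pc s k = Some DStart \<longrightarrow> acp u k = Some R1)"

definition sim_deq_scan :: "hstate \<Rightarrow> aqstate \<Rightarrow> (nat \<Rightarrow> nat) \<Rightarrow> bool" where
  "sim_deq_scan s u slot \<longleftrightarrow>
     (\<forall>k n i. pc s k = Some (DLoop n i) \<longrightarrow> acp u k = Some R1 \<and> n \<le> hback s \<and>
        (\<forall>a b. (a, b) \<in> aord u \<longrightarrow> slot a < i \<longrightarrow> (\<exists>x. pc s b = Some (E1 x)) \<or> n \<le> slot b))"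

definition sim_deq_result :: "hstate \<Rightarrow> aqstate \<Rightarrow> bool" where
  "sim_deq_result s u \<longleftrightarrow> (\<forall>k x. pc s k = Some (DRet x) \<longrightarrow> acp u k = Some R2 \<and> arv u k = Some (Val x))"

definition sim_members :: "aqstate \<Rightarrow> bool" where
  "sim_members u \<longleftrightarrow> (\<forall>k\<in>aO u. acp u k = Some A1 \<or> acp u k = Some A2)"

definition sim_labels :: "aqstate \<Rightarrow> bool" where
  "sim_labels u \<longleftrightarrow> (\<forall>k. alab u k \<noteq> None \<longrightarrow> k \<in> aO u)"

definition sim_retvals :: "aqstate \<Rightarrow> bool" where
  "sim_retvals u \<longleftrightarrow> (\<forall>k. acp u k \<noteq> Some R2 \<and> acp u k \<noteq> Some R3 \<longrightarrow> arv u k = None)"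

definition sim_order :: "hstate \<Rightarrow> aqstate \<Rightarrow> (nat \<Rightarrow> nat) \<Rightarrow> bool" where
  "sim_order s u slot \<longleftrightarrow>
     (\<forall>a b. (a, b) \<in> aord u \<longrightarrow> a \<in> aO u \<and> b \<in> aO u \<and> (\<exists>v. alab u a = Some (v, COMP)) \<and>
        ((\<exists>x. pc s b = Some (E1 x)) \<or> slot a < slot b))"

definition sim_items :: "hstate \<Rightarrow> aqstate \<Rightarrow> (nat \<Rightarrow> nat) \<Rightarrow> bool" where
  "sim_items s u slot \<longleftrightarrow>
     (\<forall>i x. items s i = Some x \<longrightarrow>
        (\<exists>k\<in>aO u. slot k = i \<and> (pc s k = Some E3 \<or> pc s k = Some Done) \<and> (\<exists>f. alab u k = Some (Val x, f))))"

definition sim_slot_inj :: "hstate \<Rightarrow> aqstate \<Rightarrow> (nat \<Rightarrow> nat) \<Rightarrow> bool" where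
  "sim_slot_inj s u slot \<longleftrightarrow>
     (\<forall>k1 k2. k1 \<in> aO u \<longrightarrow> k2 \<in> aO u \<longrightarrow> (\<nexists>x. pc s k1 = Some (E1 x)) \<longrightarrow> (\<nexists>x. pc s k2 = Some (E1 x)) \<longrightarrow>
        slot k1 = slot k2 \<longrightarrow> k1 = k2)"

text \<open>\<open>slot k\<close> is the index of \<open>items\<close> claimed by the enqueue \<open>k\<close>; it is meaningful only once \<open>k\<close> has
  incremented \<open>back\<close>.\<close>

definition hwq_sim :: "hstate \<Rightarrow> aqstate \<Rightarrow> (nat \<Rightarrow> nat) \<Rightarrow> bool" where
  "hwq_sim s u slot \<longleftrightarrow>
     sim_idle s u \<and> sim_unassigned s u \<and> sim_assigned s u slot \<and> sim_written s u slot \<and>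
     sim_done s u slot \<and> sim_deq_start s u \<and> sim_deq_scan s u slot \<and> sim_deq_result s u \<and>
     sim_members u \<and> sim_labels u \<and> sim_retvals u \<and> sim_order s u slot \<and> sim_items s u slot \<and>
     sim_slot_inj s u slot"

lemma hwq_sim_init: "hwq_sim hwq_init absq_init slot"
  by (simp add: hwq_sim_def sim_idle_def sim_unassigned_def sim_assigned_def sim_written_def
      sim_done_def sim_deq_start_def sim_deq_scan_def sim_deq_result_def sim_members_def sim_labels_def
      sim_retvals_def sim_order_def sim_items_def sim_slot_inj_def hwq_init_def absq_init_def)

lemma hwq_sim_init_unique:
  assumes sim: "hwq_sim hwq_init u slot"
  shows "u = absq_init"
proof -
  have acp: "acp u = Map.empty" using sim by (auto simp: hwq_sim_def sim_idle_def hwq_init_def)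
  then have aO: "aO u = {}" using sim by (auto simp: hwq_sim_def sim_members_def)
  have "alab u = Map.empty"
  proof
    fix k show "alab u k = None" using sim aO unfolding hwq_sim_def sim_labels_def by blast
  qed
  moreover have "arv u = Map.empty" using sim acp by (auto simp: hwq_sim_def sim_retvals_def)
  moreover have "aord u = {}" using sim aO by (auto simp: hwq_sim_def sim_order_def)
  ultimately show ?thesis using acp aO by (cases u) (simp add: absq_init_def)
qed

lemma sim_deq_scan_frame:
  assumes "sim_deq_scan s u slot"
    and "\<forall>j n i. pc s' j = Some (DLoop n i) \<longrightarrow>
           acp u' j = Some R1 \<and> (pc s j = Some (DLoop n i) \<or> i = 0 \<and> n \<le> hback s')"
    and "hback s \<le> hback s'"
    and "\<forall>a b. (a, b) \<in> aord u' \<longrightarrow> (a, b) \<in> aord u \<or> (\<exists>x. pc s' b = Some (E1 x))"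
    and "\<forall>b x. pc s b = Some (E1 x) \<longrightarrow> (\<exists>x. pc s' b = Some (E1 x))"
  shows "sim_deq_scan s' u' slot"
  unfolding sim_deq_scan_def
proof (intro allI impI conjI)
  fix j n i assume p: "pc s' j = Some (DLoop n i)"
  then show "acp u' j = Some R1" using assms(2) by blast
  show "n \<le> hback s'" using p assms(1-3) unfolding sim_deq_scan_def by fastforce
  fix a b assume ab: "(a, b) \<in> aord u'" "slot a < i"
  then have p0: "pc s j = Some (DLoop n i)" using p assms(2) by auto
  show "(\<exists>x. pc s' b = Some (E1 x)) \<or> n \<le> slot b"
  proof (cases "(a, b) \<in> aord u")
    case True
    then have "(\<exists>x. pc s b = Some (E1 x)) \<or> n \<le> slot b"
      using assms(1) p0 ab(2) unfolding sim_deq_scan_def by blast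
    then show ?thesis using assms(5) by blast
  next
    case False then show ?thesis using assms(4) ab by blast
  qed
qed

lemma sim_items_frame:
  assumes "sim_items s u slot" "items s' = items s"
    and "\<forall>j\<in>aO u. (pc s j = Some E3 \<or> pc s j = Some Done) \<longrightarrow> j \<in> aO u' \<and> slot' j = slot j \<and>
          (pc s' j = Some E3 \<or> pc s' j = Some Done) \<and> (\<forall>x f. alab u j = Some (Val x, f) \<longrightarrow> (\<exists>f'. alab u' j = Some (Val x, f')))"
  shows "sim_items s' u' slot'"
  unfolding sim_items_def
proof (intro allI impI)
  fix i x assume "items s' i = Some x"
  then obtain j f where "j \<in> aO u" "slot j = i" "pc s j = Some E3 \<or> pc s j = Some Done" "alab u j = Some (Val x, f)"
    using assms(1,2) unfolding sim_items_def by force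
  then show "\<exists>k\<in>aO u'. slot' k = i \<and> (pc s' k = Some E3 \<or> pc s' k = Some Done) \<and> (\<exists>f. alab u' k = Some (Val x, f))"
    using assms(3) by metis
qed

lemma sim_order_frame:
  assumes "sim_order s u slot" "\<And>b. (\<exists>x. pc s' b = Some (E1 x)) \<longleftrightarrow> (\<exists>x. pc s b = Some (E1 x))"
  shows "sim_order s' u slot"
  using assms unfolding sim_order_def by simp

lemma member_pc_enq:
  assumes sim: "hwq_sim s u slot" and "k \<in> aO u"
  shows "(\<exists>x. pc s k = Some (E1 x)) \<or> (\<exists>x i. pc s k = Some (E2 x i)) \<or> pc s k = Some E3 \<or> pc s k = Some Done"
proof -
  have a: "acp u k = Some A1 \<or> acp u k = Some A2"
    using sim assms(2) by (auto simp: hwq_sim_def sim_members_def)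
  show ?thesis
  proof (cases "pc s k")
    case None then show ?thesis using sim a by (auto simp: hwq_sim_def sim_idle_def)
  next
    case (Some p) then show ?thesis using a sim
      by (cases p) (auto simp: hwq_sim_def sim_deq_start_def sim_deq_scan_def sim_deq_result_def)
  qed
qed

lemma completed_member_done:
  assumes "hwq_sim s u slot" "k \<in> aO u" "alab u k = Some (v, COMP)"
  shows "pc s k = Some Done"
  using member_pc_enq[OF assms(1,2)] assms
  by (auto simp: hwq_sim_def sim_unassigned_def sim_assigned_def sim_written_def)

lemma slot_lt_back:
  assumes "hwq_sim s u slot" "k \<in> aO u" "\<nexists>x. pc s k = Some (E1 x)"
  shows "slot k < hback s"
  using member_pc_enq[OF assms(1,2)] assms
  by (auto simp: hwq_sim_def sim_assigned_def sim_written_def sim_done_def)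

lemma hwq_sim_InvEnq:
  assumes sim: "hwq_sim s u slot" and step: "hwq_step s (InvEnq d k) s'"
  shows "\<exists>u'. absq_step u (InvEnq d k) u' \<and> hwq_sim s' u' slot"
proof -
  from step obtain x where pc_k: "pc s k = None" and d: "d = Val x"
    and s': "s' = s\<lparr>pc := (pc s)(k \<mapsto> E1 x), used := insert x (used s)\<rparr>" by auto
  have acp_k: "acp u k = None" using sim pc_k by (simp add: hwq_sim_def sim_idle_def)
  have kO: "k \<notin> aO u" using sim acp_k by (force simp: hwq_sim_def sim_members_def)
  define u' where "u' = u\<lparr>aO := insert k (aO u),
            aord := aord u \<union> {(k'', k) | k'' v. k'' \<in> aO u \<and> alab u k'' = Some (v, COMP)},
            alab := (alab u)(k \<mapsto> (d, PEND)),
            acp := (acp u)(k \<mapsto> A1)\<rparr>"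
  have "absq_step u (InvEnq d k) u'" using acp_k d u'_def by auto
  moreover have "hwq_sim s' u' slot"
    unfolding hwq_sim_def
  proof (intro conjI)
    show "sim_idle s' u'" using sim unfolding hwq_sim_def s' u'_def sim_idle_def by auto
    show "sim_unassigned s' u'"
      using sim unfolding hwq_sim_def s' u'_def sim_unassigned_def d by auto
    show "sim_assigned s' u' slot"
      using sim pc_k unfolding hwq_sim_def s' u'_def sim_assigned_def d by auto
    show "sim_written s' u' slot"
      using sim pc_k unfolding hwq_sim_def s' u'_def sim_written_def d by auto
    show "sim_done s' u' slot" using sim pc_k unfolding hwq_sim_def s' u'_def sim_done_def d by auto
    show "sim_deq_start s' u'"
      using sim pc_k unfolding hwq_sim_def s' u'_def sim_deq_start_def d by auto
    show "sim_deq_scan s' u' slot"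
      by (rule sim_deq_scan_frame[where s = s and u = u])
        (use sim pc_k in \<open>auto simp: hwq_sim_def s' u'_def sim_deq_scan_def\<close>)
    show "sim_deq_result s' u'"
      using sim pc_k unfolding hwq_sim_def s' u'_def sim_deq_result_def d by auto
    show "sim_members u'" using sim pc_k unfolding hwq_sim_def s' u'_def sim_members_def d by auto
    show "sim_labels u'" using sim pc_k unfolding hwq_sim_def s' u'_def sim_labels_def d by auto
    show "sim_retvals u'" using sim acp_k unfolding hwq_sim_def s' u'_def sim_retvals_def d by auto
    show "sim_order s' u' slot" using sim kO unfolding hwq_sim_def s' u'_def sim_order_def d by auto
    show "sim_items s' u' slot"
      by (rule sim_items_frame[where s = s and u = u and slot = slot])
        (use sim pc_k in \<open>auto simp: hwq_sim_def s' u'_def\<close>)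
    show "sim_slot_inj s' u' slot"
      using sim pc_k unfolding hwq_sim_def s' u'_def sim_slot_inj_def d by auto
  qed
  ultimately show ?thesis by blast
qed

lemma hwq_sim_InvDeq:
  assumes sim: "hwq_sim s u slot" and step: "hwq_step s (InvDeq k) s'"
  shows "\<exists>u'. absq_step u (InvDeq k) u' \<and> hwq_sim s' u' slot"
proof -
  from step have pc_k: "pc s k = None" and s': "s' = s\<lparr>pc := (pc s)(k \<mapsto> DStart)\<rparr>" by auto
  have acp_k: "acp u k = None" using sim pc_k by (simp add: hwq_sim_def sim_idle_def)
  have kO: "k \<notin> aO u" using sim acp_k by (force simp: hwq_sim_def sim_members_def)
  define u' where "u' = u\<lparr>acp := (acp u)(k \<mapsto> R1)\<rparr>"
  have "absq_step u (InvDeq k) u'" using acp_k u'_def by auto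
  moreover have "hwq_sim s' u' slot"
    unfolding hwq_sim_def
  proof (intro conjI)
    show "sim_idle s' u'" using sim unfolding hwq_sim_def s' u'_def sim_idle_def by auto
    show "sim_unassigned s' u'"
      using sim pc_k unfolding hwq_sim_def s' u'_def sim_unassigned_def by auto
    show "sim_assigned s' u' slot"
      using sim pc_k unfolding hwq_sim_def s' u'_def sim_assigned_def by auto
    show "sim_written s' u' slot"
      using sim pc_k unfolding hwq_sim_def s' u'_def sim_written_def by auto
    show "sim_done s' u' slot" using sim pc_k unfolding hwq_sim_def s' u'_def sim_done_def by auto
    show "sim_deq_start s' u'"
      using sim pc_k unfolding hwq_sim_def s' u'_def sim_deq_start_def by auto
    show "sim_deq_scan s' u' slot"
      by (rule sim_deq_scan_frame[where s = s and u = u])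
        (use sim pc_k in \<open>auto simp: hwq_sim_def s' u'_def sim_deq_scan_def\<close>)
    show "sim_deq_result s' u'"
      using sim pc_k unfolding hwq_sim_def s' u'_def sim_deq_result_def by auto
    show "sim_members u'" using sim kO unfolding hwq_sim_def s' u'_def sim_members_def by auto
    show "sim_labels u'" using sim unfolding hwq_sim_def s' u'_def sim_labels_def by auto
    show "sim_retvals u'" using sim acp_k unfolding hwq_sim_def s' u'_def sim_retvals_def by auto
    show "sim_order s' u' slot" using sim kO unfolding hwq_sim_def s' u'_def sim_order_def by auto
    show "sim_items s' u' slot"
      by (rule sim_items_frame[where s = s and u = u and slot = slot])
        (use sim pc_k in \<open>auto simp: hwq_sim_def s' u'_def\<close>)
    show "sim_slot_inj s' u' slot"
      using sim pc_k unfolding hwq_sim_def s' u'_def sim_slot_inj_def by auto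
  qed
  ultimately show ?thesis by blast
qed

lemma hwq_sim_RetEnq:
  assumes sim: "hwq_sim s u slot" and step: "hwq_step s (RetEnq k) s'"
  shows "\<exists>u'. absq_step u (RetEnq k) u' \<and> hwq_sim s' u' slot"
proof -
  from step have pc_k: "pc s k = Some E3" and s': "s' = s\<lparr>pc := (pc s)(k \<mapsto> Done)\<rparr>" by auto
  have acp_k: "acp u k = Some A1" using sim pc_k by (simp add: hwq_sim_def sim_written_def)
  define u' where "u' = u\<lparr>alab := (if k \<in> aO u then (alab u)(k \<mapsto> (fst (the (alab u k)), COMP)) else alab u),
            acp := (acp u)(k \<mapsto> A2)\<rparr>"
  have "absq_step u (RetEnq k) u'" using acp_k u'_def by auto
  moreover have "hwq_sim s' u' slot"
    unfolding hwq_sim_def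
  proof (intro conjI)
    show "sim_idle s' u'" using sim unfolding hwq_sim_def s' u'_def sim_idle_def by auto
    show "sim_unassigned s' u'"
      using sim pc_k unfolding hwq_sim_def s' u'_def sim_unassigned_def by auto
    show "sim_assigned s' u' slot"
      using sim pc_k unfolding hwq_sim_def s' u'_def sim_assigned_def by auto
    show "sim_written s' u' slot"
      using sim pc_k unfolding hwq_sim_def s' u'_def sim_written_def by auto
    show "sim_done s' u' slot"
      using sim pc_k unfolding hwq_sim_def s' u'_def sim_done_def sim_written_def by auto
    show "sim_deq_start s' u'"
      using sim pc_k unfolding hwq_sim_def s' u'_def sim_deq_start_def by auto
    show "sim_deq_scan s' u' slot"
      by (rule sim_deq_scan_frame[where s = s and u = u])
        (use sim pc_k in \<open>auto simp: hwq_sim_def s' u'_def sim_deq_scan_def\<close>)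
    show "sim_deq_result s' u'"
      using sim pc_k unfolding hwq_sim_def s' u'_def sim_deq_result_def by auto
    show "sim_members u'" using sim unfolding hwq_sim_def s' u'_def sim_members_def by auto
    show "sim_labels u'" using sim unfolding hwq_sim_def s' u'_def sim_labels_def by auto
    show "sim_retvals u'" using sim acp_k unfolding hwq_sim_def s' u'_def sim_retvals_def by auto
    show "sim_order s' u' slot" unfolding sim_order_def
    proof (intro allI impI)
      fix a b assume "(a,b) \<in> aord u'"
      then have "(a,b) \<in> aord u" by (simp add: u'_def)
      with sim have "a \<in> aO u \<and> b \<in> aO u \<and> (\<exists>v. alab u a = Some (v, COMP)) \<and> ((\<exists>x. pc s b = Some (E1 x)) \<or> slot a < slot b)"
        unfolding hwq_sim_def sim_order_def by blast
      with pc_k show "a \<in> aO u' \<and> b \<in> aO u' \<and> (\<exists>v. alab u' a = Some (v, COMP)) \<and> ((\<exists>x. pc s' b = Some (E1 x)) \<or> slot a < slot b)"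
        unfolding s' u'_def by auto
    qed
    show "sim_items s' u' slot"
      by (rule sim_items_frame[where s = s and u = u and slot = slot])
        (use sim pc_k in \<open>auto simp: hwq_sim_def s' u'_def\<close>)
    show "sim_slot_inj s' u' slot"
      using sim pc_k unfolding hwq_sim_def s' u'_def sim_slot_inj_def by auto
  qed
  ultimately show ?thesis by blast
qed

lemma hwq_sim_RetDeq:
  assumes sim: "hwq_sim s u slot" and step: "hwq_step s (RetDeq d k) s'"
  shows "\<exists>u'. absq_step u (RetDeq d k) u' \<and> hwq_sim s' u' slot"
proof -
  from step obtain x where pc_k: "pc s k = Some (DRet x)" and d: "d = Val x"
     and s': "s' = s\<lparr>pc := (pc s)(k \<mapsto> Done)\<rparr>" by auto
  have acp_k: "acp u k = Some R2" "arv u k = Some (Val x)"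
    using sim pc_k by (simp_all add: hwq_sim_def sim_deq_result_def)
  have kO: "k \<notin> aO u" using sim acp_k by (force simp: hwq_sim_def sim_members_def)
  define u' where "u' = u\<lparr>acp := (acp u)(k \<mapsto> R3)\<rparr>"
  have "absq_step u (RetDeq d k) u'" using acp_k u'_def d by auto
  moreover have "hwq_sim s' u' slot"
    unfolding hwq_sim_def
  proof (intro conjI)
    show "sim_idle s' u'" using sim unfolding hwq_sim_def s' u'_def sim_idle_def by auto
    show "sim_unassigned s' u'"
      using sim pc_k unfolding hwq_sim_def s' u'_def sim_unassigned_def by auto
    show "sim_assigned s' u' slot"
      using sim pc_k unfolding hwq_sim_def s' u'_def sim_assigned_def by auto
    show "sim_written s' u' slot"
      using sim pc_k unfolding hwq_sim_def s' u'_def sim_written_def by auto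
    show "sim_done s' u' slot"
      using sim pc_k kO unfolding hwq_sim_def s' u'_def sim_done_def by auto
    show "sim_deq_start s' u'"
      using sim pc_k unfolding hwq_sim_def s' u'_def sim_deq_start_def by auto
    show "sim_deq_scan s' u' slot"
      by (rule sim_deq_scan_frame[where s = s and u = u])
        (use sim pc_k in \<open>auto simp: hwq_sim_def s' u'_def sim_deq_scan_def\<close>)
    show "sim_deq_result s' u'"
      using sim pc_k unfolding hwq_sim_def s' u'_def sim_deq_result_def by auto
    show "sim_members u'" using sim kO unfolding hwq_sim_def s' u'_def sim_members_def by auto
    show "sim_labels u'" using sim unfolding hwq_sim_def s' u'_def sim_labels_def by auto
    show "sim_retvals u'" using sim acp_k unfolding hwq_sim_def s' u'_def sim_retvals_def by auto
    show "sim_order s' u' slot" using sim kO unfolding hwq_sim_def s' u'_def sim_order_def by auto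
    show "sim_items s' u' slot"
      by (rule sim_items_frame[where s = s and u = u and slot = slot])
        (use sim pc_k in \<open>auto simp: hwq_sim_def s' u'_def\<close>)
    show "sim_slot_inj s' u' slot"
      using sim pc_k unfolding hwq_sim_def s' u'_def sim_slot_inj_def by auto
  qed
  ultimately show ?thesis by blast
qed

lemma scanned_member_minimal:
  assumes sim: "hwq_sim s u slot" and "pc s k = Some (DLoop n i)" "i < n"
    and "pc s k' = Some E3 \<or> pc s k' = Some Done" "slot k' = i"
  shows "\<forall>k''\<in>aO u. (k'', k') \<notin> aord u"
proof (intro ballI notI)
  fix k'' assume "k'' \<in> aO u" "(k'', k') \<in> aord u"
  then have "slot k'' < i" using sim assms(4,5) unfolding hwq_sim_def sim_order_def by fastforce
  then have "(\<exists>x. pc s k' = Some (E1 x)) \<or> n \<le> slot k'"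
    using sim assms(2) \<open>(k'', k') \<in> aord u\<close> unfolding hwq_sim_def sim_deq_scan_def by blast
  then show False using assms(3-5) by auto
qed

lemma sim_items_swap:
  assumes sim: "hwq_sim s u slot" and pc_k: "pc s k = Some (DLoop n i)" and "slot k' = i"
    and s': "s' = s\<lparr>items := (items s)(i := None), pc := (pc s)(k \<mapsto> DRet x)\<rparr>"
    and "aO u' = aO u - {k'}" "alab u' = (alab u)(k' := None)"
  shows "sim_items s' u' slot"
  unfolding sim_items_def
proof (intro allI impI)
  fix j y assume "items s' j = Some y"
  then have "j \<noteq> i" "items s j = Some y" unfolding s' by (auto split: if_splits)
  then obtain k'' f where k'': "k'' \<in> aO u" "slot k'' = j" "pc s k'' = Some E3 \<or> pc s k'' = Some Done"
    "alab u k'' = Some (Val y, f)"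
    using sim unfolding hwq_sim_def sim_items_def by blast
  moreover have "k'' \<noteq> k'" "k'' \<noteq> k" using k'' \<open>j \<noteq> i\<close> \<open>slot k' = i\<close> pc_k by auto
  ultimately show "\<exists>k\<in>aO u'. slot k = j \<and> (pc s' k = Some E3 \<or> pc s' k = Some Done) \<and>
      (\<exists>f. alab u' k = Some (Val y, f))"
    using assms(5,6) unfolding s' by auto
qed

lemma hwq_sim_LinDeq:
  assumes sim: "hwq_sim s u slot" and step: "hwq_step s (LinDeq d k) s'"
  shows "\<exists>u'. absq_step u (LinDeq d k) u' \<and> hwq_sim s' u' slot"
proof -
  from step obtain n i x where pc_k: "pc s k = Some (DLoop n i)" and "i < n" and it: "items s i = Some x"
     and d: "d = Val x"
     and s': "s' = s\<lparr>items := (items s)(i := None), pc := (pc s)(k \<mapsto> DRet x)\<rparr>" by auto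
  have acp_k: "acp u k = Some R1" using sim pc_k by (simp add: hwq_sim_def sim_deq_scan_def)
  have kO: "k \<notin> aO u" using sim acp_k by (force simp: hwq_sim_def sim_members_def)
  obtain k' f where k'_member: "k' \<in> aO u" and slot_k': "slot k' = i" and pc_k': "pc s k' = Some E3 \<or> pc s k' = Some Done"
    and label_k': "alab u k' = Some (Val x, f)"
    using sim it unfolding hwq_sim_def sim_items_def by blast
  have minimal: "\<forall>k''\<in>aO u. (k'', k') \<notin> aord u"
    using scanned_member_minimal[OF sim pc_k \<open>i < n\<close> pc_k' slot_k'] .
  have other_slot: "\<And>j. j \<in> aO u \<Longrightarrow> j \<noteq> k' \<Longrightarrow> \<nexists>x. pc s j = Some (E1 x) \<Longrightarrow> slot j \<noteq> i"
    using sim k'_member pc_k' slot_k' unfolding hwq_sim_def sim_slot_inj_def by fastforce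
  define u' where "u' = u\<lparr>aO := aO u - {k'},
                  aord := {(a, b). (a, b) \<in> aord u \<and> a \<noteq> k' \<and> b \<noteq> k'},
                  alab := (alab u)(k' := None),
                  arv := (arv u)(k \<mapsto> d),
                  acp := (acp u)(k \<mapsto> R2)\<rparr>"
  have "absq_step u (LinDeq d k) u'" using acp_k u'_def d k'_member minimal label_k' by auto
  moreover have "hwq_sim s' u' slot"
    unfolding hwq_sim_def
  proof (intro conjI)
    show "sim_idle s' u'" using sim unfolding hwq_sim_def s' u'_def sim_idle_def by auto
    show "sim_unassigned s' u'"
      using sim pc_k pc_k' unfolding hwq_sim_def s' u'_def sim_unassigned_def by auto
    show "sim_assigned s' u' slot"
      using sim pc_k pc_k' unfolding hwq_sim_def s' u'_def sim_assigned_def by auto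
    show "sim_written s' u' slot"
      using sim pc_k other_slot unfolding hwq_sim_def s' u'_def sim_written_def by auto
    show "sim_done s' u' slot"
      using sim pc_k other_slot unfolding hwq_sim_def s' u'_def sim_done_def by auto
    show "sim_deq_start s' u'"
      using sim pc_k unfolding hwq_sim_def s' u'_def sim_deq_start_def by auto
    show "sim_deq_scan s' u' slot"
      by (rule sim_deq_scan_frame[where s = s and u = u])
        (use sim pc_k in \<open>auto simp: hwq_sim_def s' u'_def sim_deq_scan_def\<close>)
    show "sim_deq_result s' u'"
      using sim pc_k d unfolding hwq_sim_def s' u'_def sim_deq_result_def by auto
    show "sim_members u'" using sim kO unfolding hwq_sim_def s' u'_def sim_members_def by auto
    show "sim_labels u'" using sim unfolding hwq_sim_def s' u'_def sim_labels_def by auto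
    show "sim_retvals u'" using sim acp_k unfolding hwq_sim_def s' u'_def sim_retvals_def by auto
    show "sim_order s' u' slot" using sim kO unfolding hwq_sim_def s' u'_def sim_order_def by auto
    show "sim_items s' u' slot"
      by (rule sim_items_swap[OF sim pc_k slot_k' s']) (simp_all add: u'_def)
    show "sim_slot_inj s' u' slot"
      using sim pc_k unfolding hwq_sim_def s' u'_def sim_slot_inj_def by auto
  qed
  ultimately show ?thesis by blast
qed

context
  fixes s u slot k x s'
  assumes sim: "hwq_sim s u slot" and pc_k: "pc s k = Some (E1 x)"
    and s': "s' = s\<lparr>hback := Suc (hback s), pc := (pc s)(k \<mapsto> E2 x (hback s))\<rparr>"
begin

lemma claim_slot_member: "k \<in> aO u" "alab u k = Some (Val x, PEND)" "acp u k = Some A1"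
  using sim pc_k by (auto simp: hwq_sim_def sim_unassigned_def)

lemma claim_slot_not_predecessor: "(a, b) \<in> aord u \<Longrightarrow> a \<noteq> k"
  using sim claim_slot_member unfolding hwq_sim_def sim_order_def by force

lemma claim_slot_deq_scan: "sim_deq_scan s' u (slot(k := hback s))"
  unfolding sim_deq_scan_def
proof (intro allI impI conjI)
  fix j n i assume "pc s' j = Some (DLoop n i)"
  then have "pc s j = Some (DLoop n i)" using pc_k unfolding s' by (auto split: if_splits)
  then have scan: "acp u j = Some R1" "n \<le> hback s"
    "\<forall>a b. (a, b) \<in> aord u \<longrightarrow> slot a < i \<longrightarrow> (\<exists>x. pc s b = Some (E1 x)) \<or> n \<le> slot b"
    using sim unfolding hwq_sim_def sim_deq_scan_def by blast+
  then show "acp u j = Some R1" "n \<le> hback s'" unfolding s' by auto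
  fix a b assume ab: "(a, b) \<in> aord u" "(slot(k := hback s)) a < i"
  then have "slot a < i" using claim_slot_not_predecessor by auto
  then have "(\<exists>x. pc s b = Some (E1 x)) \<or> n \<le> slot b" using scan ab by blast
  then show "(\<exists>x. pc s' b = Some (E1 x)) \<or> n \<le> (slot(k := hback s)) b"
    using scan unfolding s' by auto
qed

lemma claim_slot_order: "sim_order s' u (slot(k := hback s))"
  unfolding sim_order_def
proof (intro allI impI)
  fix a b assume ab: "(a, b) \<in> aord u"
  then have ord: "a \<in> aO u" "b \<in> aO u" "\<exists>v. alab u a = Some (v, COMP)"
    "(\<exists>x. pc s b = Some (E1 x)) \<or> slot a < slot b"
    using sim unfolding hwq_sim_def sim_order_def by blast+
  have "\<nexists>x. pc s a = Some (E1 x)" using ord(3) sim unfolding hwq_sim_def sim_unassigned_def by force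
  then have "slot a < hback s" using slot_lt_back[OF sim ord(1)] by blast
  then show "a \<in> aO u \<and> b \<in> aO u \<and> (\<exists>v. alab u a = Some (v, COMP)) \<and>
      ((\<exists>x. pc s' b = Some (E1 x)) \<or> (slot(k := hback s)) a < (slot(k := hback s)) b)"
    using ord claim_slot_not_predecessor[OF ab] unfolding s' by auto
qed

lemma claim_slot_slot_inj: "sim_slot_inj s' u (slot(k := hback s))"
  unfolding sim_slot_inj_def
proof (intro allI impI)
  fix k1 k2 assume k12: "k1 \<in> aO u" "k2 \<in> aO u" "\<nexists>x. pc s' k1 = Some (E1 x)" "\<nexists>x. pc s' k2 = Some (E1 x)"
    "(slot(k := hback s)) k1 = (slot(k := hback s)) k2"
  show "k1 = k2"
  proof (cases "k1 = k \<or> k2 = k")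
    case True
    then show ?thesis using k12 slot_lt_back[OF sim] pc_k unfolding s'
      by (auto split: if_splits; metis less_irrefl)
  next
    case False
    then show ?thesis using k12 sim unfolding hwq_sim_def s' sim_slot_inj_def by auto
  qed
qed

lemma hwq_sim_claim_slot: "hwq_sim s' u (slot(k := hback s))"
  unfolding hwq_sim_def
proof (intro conjI claim_slot_deq_scan claim_slot_order claim_slot_slot_inj)
  show "sim_idle s' u"
    using sim pc_k unfolding hwq_sim_def s' sim_idle_def
    by (auto, metis not_None_eq option.distinct(1))
  show "sim_unassigned s' u" using sim pc_k unfolding hwq_sim_def s' sim_unassigned_def by auto
  show "sim_assigned s' u (slot(k := hback s))"
    using sim pc_k claim_slot_member unfolding hwq_sim_def s' sim_assigned_def
    by (auto, metis less_SucI)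
  show "sim_written s' u (slot(k := hback s))"
    using sim pc_k unfolding hwq_sim_def s' sim_written_def by auto
  show "sim_done s' u (slot(k := hback s))"
    using sim pc_k unfolding hwq_sim_def s' sim_done_def by auto
  show "sim_deq_start s' u" using sim pc_k unfolding hwq_sim_def s' sim_deq_start_def by auto
  show "sim_deq_result s' u" using sim pc_k unfolding hwq_sim_def s' sim_deq_result_def by auto
  show "sim_members u" "sim_labels u" "sim_retvals u" using sim by (simp_all add: hwq_sim_def)
  show "sim_items s' u (slot(k := hback s))"
    by (rule sim_items_frame[where s = s and u = u and slot = slot])
      (use sim pc_k in \<open>auto simp: hwq_sim_def s'\<close>)
qed

end

lemma hwq_sim_write_slot:
  assumes sim: "hwq_sim s u slot" and pc_k: "pc s k = Some (E2 x i)"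
    and s': "s' = s\<lparr>items := (items s)(i \<mapsto> x), pc := (pc s)(k \<mapsto> E3)\<rparr>"
  shows "hwq_sim s' u slot"
proof -
  have kO: "k \<in> aO u" and label_k: "alab u k = Some (Val x, PEND)" and acp_k: "acp u k = Some A1"
    and slot_k: "slot k = i" and slot_bound: "i < hback s"
    using sim pc_k by (auto simp: hwq_sim_def sim_assigned_def)
  have other_slot: "\<And>j. j \<in> aO u \<Longrightarrow> j \<noteq> k \<Longrightarrow> \<nexists>x. pc s j = Some (E1 x) \<Longrightarrow> slot j \<noteq> i"
    using sim kO pc_k slot_k unfolding hwq_sim_def sim_slot_inj_def by fastforce
  show ?thesis unfolding hwq_sim_def
  proof (intro conjI)
    show "sim_idle s' u"
      using sim pc_k unfolding hwq_sim_def s' sim_idle_def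
      by (auto, metis not_None_eq option.distinct(1))
    show "sim_unassigned s' u" using sim pc_k unfolding hwq_sim_def s' sim_unassigned_def by auto
    show "sim_assigned s' u slot" using sim pc_k unfolding hwq_sim_def s' sim_assigned_def by auto
    show "sim_written s' u slot"
      using sim pc_k other_slot kO label_k acp_k slot_k slot_bound unfolding hwq_sim_def s' sim_written_def by auto
    show "sim_done s' u slot" using sim pc_k other_slot unfolding hwq_sim_def s' sim_done_def by auto
    show "sim_deq_start s' u" using sim pc_k unfolding hwq_sim_def s' sim_deq_start_def by auto
    show "sim_deq_scan s' u slot"
      by (rule sim_deq_scan_frame[where s = s and u = u])
        (use sim pc_k in \<open>auto simp: hwq_sim_def s' sim_deq_scan_def\<close>)
    show "sim_deq_result s' u" using sim pc_k unfolding hwq_sim_def s' sim_deq_result_def by auto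
    show "sim_members u" "sim_labels u" "sim_retvals u" using sim by (simp_all add: hwq_sim_def)
    show "sim_order s' u slot"
      by (rule sim_order_frame[where s = s])
        (use sim pc_k in \<open>auto simp: hwq_sim_def s'\<close>)
    show "sim_items s' u slot" unfolding sim_items_def
    proof (intro allI impI)
      fix j y assume "items s' j = Some y"
      show "\<exists>k\<in>aO u. slot k = j \<and> (pc s' k = Some E3 \<or> pc s' k = Some Done) \<and> (\<exists>f. alab u k = Some (Val y, f))"
      proof (cases "j = i")
        case True
        then show ?thesis using \<open>items s' j = Some y\<close> kO slot_k label_k unfolding s' by auto
      next
        case False
        then have "items s j = Some y" using \<open>items s' j = Some y\<close> unfolding s' by auto
        then obtain k' f where "k' \<in> aO u" "slot k' = j" "pc s k' = Some E3 \<or> pc s k' = Some Done" "alab u k' = Some (Val y, f)"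
          using sim unfolding hwq_sim_def sim_items_def by blast
        then show ?thesis using pc_k unfolding s' by (auto split: if_splits)
      qed
    qed
    show "sim_slot_inj s' u slot" using sim pc_k unfolding hwq_sim_def s' sim_slot_inj_def by auto
  qed
qed

lemma hwq_sim_read_back:
  assumes sim: "hwq_sim s u slot" and pc_k: "pc s k = Some DStart"
    and s': "s' = s\<lparr>pc := (pc s)(k \<mapsto> DLoop (hback s) 0)\<rparr>"
  shows "hwq_sim s' u slot"
proof -
  have acp_k: "acp u k = Some R1" using sim pc_k by (auto simp: hwq_sim_def sim_deq_start_def)
  show ?thesis unfolding hwq_sim_def
  proof (intro conjI)
    show "sim_idle s' u"
      using sim pc_k unfolding hwq_sim_def s' sim_idle_def
      by (auto, metis not_None_eq option.distinct(1))
    show "sim_unassigned s' u" using sim pc_k unfolding hwq_sim_def s' sim_unassigned_def by auto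
    show "sim_assigned s' u slot" using sim pc_k unfolding hwq_sim_def s' sim_assigned_def by auto
    show "sim_written s' u slot" using sim pc_k unfolding hwq_sim_def s' sim_written_def by auto
    show "sim_done s' u slot" using sim pc_k unfolding hwq_sim_def s' sim_done_def by auto
    show "sim_deq_start s' u" using sim pc_k unfolding hwq_sim_def s' sim_deq_start_def by auto
    show "sim_deq_scan s' u slot"
      by (rule sim_deq_scan_frame[where s = s and u = u])
        (use sim pc_k acp_k in \<open>auto simp: hwq_sim_def s' sim_deq_scan_def\<close>)
    show "sim_deq_result s' u" using sim pc_k unfolding hwq_sim_def s' sim_deq_result_def by auto
    show "sim_members u" "sim_labels u" "sim_retvals u" using sim by (simp_all add: hwq_sim_def)
    show "sim_order s' u slot"
      by (rule sim_order_frame[where s = s])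
        (use sim pc_k in \<open>auto simp: hwq_sim_def s'\<close>)
    show "sim_items s' u slot"
      by (rule sim_items_frame[where s = s and u = u and slot = slot])
        (use sim pc_k in \<open>auto simp: hwq_sim_def s'\<close>)
    show "sim_slot_inj s' u slot" using sim pc_k unfolding hwq_sim_def s' sim_slot_inj_def by auto
  qed
qed

lemma empty_slot_not_predecessor:
  assumes sim: "hwq_sim s u slot" and "(a, b) \<in> aord u" "items s i = None"
  shows "slot a \<noteq> i"
proof
  assume "slot a = i"
  obtain v where a: "a \<in> aO u" "alab u a = Some (v, COMP)"
    using sim assms(2) unfolding hwq_sim_def sim_order_def by blast
  then have "pc s a = Some Done" by (rule completed_member_done[OF sim])
  then obtain y where "items s (slot a) = Some y" using sim a unfolding hwq_sim_def sim_done_def by blast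
  then show False using \<open>slot a = i\<close> assms(3) by simp
qed

lemma sim_deq_scan_skip_slot:
  assumes sim: "hwq_sim s u slot" and pc_k: "pc s k = Some (DLoop n i)" and it: "items s i = None"
    and s': "s' = s\<lparr>pc := (pc s)(k \<mapsto> DLoop n (Suc i))\<rparr>"
  shows "sim_deq_scan s' u slot"
  unfolding sim_deq_scan_def
proof (intro allI impI conjI)
  have scan: "sim_deq_scan s u slot" using sim by (simp add: hwq_sim_def)
  fix j m l assume p: "pc s' j = Some (DLoop m l)"
  show "acp u j = Some R1" "m \<le> hback s'"
    using p pc_k scan unfolding s' sim_deq_scan_def by (auto split: if_splits)
  fix a b assume ab: "(a, b) \<in> aord u" "slot a < l"
  show "(\<exists>x. pc s' b = Some (E1 x)) \<or> m \<le> slot b"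
  proof (cases "j = k")
    case True
    then have "m = n" "l = Suc i" using p unfolding s' by auto
    then have "slot a < i" using ab empty_slot_not_predecessor[OF sim ab(1) it] by auto
    then have "(\<exists>x. pc s b = Some (E1 x)) \<or> n \<le> slot b"
      using scan pc_k ab unfolding sim_deq_scan_def by blast
    then show ?thesis using pc_k \<open>m = n\<close> unfolding s' by auto
  next
    case False
    then have "pc s j = Some (DLoop m l)" using p unfolding s' by auto
    then have "(\<exists>x. pc s b = Some (E1 x)) \<or> m \<le> slot b"
      using scan ab unfolding sim_deq_scan_def by blast
    then show ?thesis using pc_k unfolding s' by auto
  qed
qed

lemma hwq_sim_skip_slot:
  assumes sim: "hwq_sim s u slot" and pc_k: "pc s k = Some (DLoop n i)" and it: "items s i = None"
    and s': "s' = s\<lparr>pc := (pc s)(k \<mapsto> DLoop n (Suc i))\<rparr>"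
  shows "hwq_sim s' u slot"
proof -
  show ?thesis
    unfolding hwq_sim_def
  proof (intro conjI)
    show "sim_idle s' u"
      using sim pc_k unfolding hwq_sim_def s' sim_idle_def
      by (auto, metis not_None_eq option.distinct(1))
    show "sim_unassigned s' u" using sim pc_k unfolding hwq_sim_def s' sim_unassigned_def by auto
    show "sim_assigned s' u slot" using sim pc_k unfolding hwq_sim_def s' sim_assigned_def by auto
    show "sim_written s' u slot" using sim pc_k unfolding hwq_sim_def s' sim_written_def by auto
    show "sim_done s' u slot" using sim pc_k unfolding hwq_sim_def s' sim_done_def by auto
    show "sim_deq_start s' u" using sim pc_k unfolding hwq_sim_def s' sim_deq_start_def by auto
    show "sim_deq_scan s' u slot" by (rule sim_deq_scan_skip_slot[OF sim pc_k it s'])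
    show "sim_deq_result s' u" using sim pc_k unfolding hwq_sim_def s' sim_deq_result_def by auto
    show "sim_members u" "sim_labels u" "sim_retvals u" using sim by (simp_all add: hwq_sim_def)
    show "sim_order s' u slot"
      by (rule sim_order_frame[where s = s])
        (use sim pc_k in \<open>auto simp: hwq_sim_def s'\<close>)
    show "sim_items s' u slot"
      by (rule sim_items_frame[where s = s and u = u and slot = slot])
        (use sim pc_k in \<open>auto simp: hwq_sim_def s'\<close>)
    show "sim_slot_inj s' u slot" using sim pc_k unfolding hwq_sim_def s' sim_slot_inj_def by auto
  qed
qed

lemma hwq_sim_restart:
  assumes sim: "hwq_sim s u slot" and pc_k: "pc s k = Some (DLoop n i)"
    and s': "s' = s\<lparr>pc := (pc s)(k \<mapsto> DStart)\<rparr>"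
  shows "hwq_sim s' u slot"
proof -
  have acp_k: "acp u k = Some R1" using sim pc_k by (auto simp: hwq_sim_def sim_deq_scan_def)
  show ?thesis unfolding hwq_sim_def
  proof (intro conjI)
    show "sim_idle s' u"
      using sim pc_k unfolding hwq_sim_def s' sim_idle_def
      by (auto, metis not_None_eq option.distinct(1))
    show "sim_unassigned s' u" using sim pc_k unfolding hwq_sim_def s' sim_unassigned_def by auto
    show "sim_assigned s' u slot" using sim pc_k unfolding hwq_sim_def s' sim_assigned_def by auto
    show "sim_written s' u slot" using sim pc_k unfolding hwq_sim_def s' sim_written_def by auto
    show "sim_done s' u slot" using sim pc_k unfolding hwq_sim_def s' sim_done_def by auto
    show "sim_deq_start s' u"
      using sim pc_k acp_k unfolding hwq_sim_def s' sim_deq_start_def by auto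
    show "sim_deq_scan s' u slot"
      by (rule sim_deq_scan_frame[where s = s and u = u])
        (use sim pc_k in \<open>auto simp: hwq_sim_def s' sim_deq_scan_def\<close>)
    show "sim_deq_result s' u" using sim pc_k unfolding hwq_sim_def s' sim_deq_result_def by auto
    show "sim_members u" "sim_labels u" "sim_retvals u" using sim by (simp_all add: hwq_sim_def)
    show "sim_order s' u slot"
      by (rule sim_order_frame[where s = s])
        (use sim pc_k in \<open>auto simp: hwq_sim_def s'\<close>)
    show "sim_items s' u slot"
      by (rule sim_items_frame[where s = s and u = u and slot = slot])
        (use sim pc_k in \<open>auto simp: hwq_sim_def s'\<close>)
    show "sim_slot_inj s' u slot" using sim pc_k unfolding hwq_sim_def s' sim_slot_inj_def by auto
  qed
qed

lemma hwq_sim_Tau: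
  assumes sim: "hwq_sim s u slot" and "hwq_step s Tau s'"
  shows "\<exists>slot'. hwq_sim s' u slot'"
  using assms(2) unfolding hwq_step.simps
  by (elim exE disjE conjE)
    (blast intro: hwq_sim_claim_slot[OF sim] hwq_sim_write_slot[OF sim] hwq_sim_read_back[OF sim]
      hwq_sim_skip_slot[OF sim] hwq_sim_restart[OF sim])+

theorem hwq_is_fwd_sim: "is_fwd_sim visible HWQ AbsQ (\<lambda>s u. \<exists>slot. hwq_sim s u slot)"
  unfolding is_fwd_sim_def
proof (intro conjI allI impI)
  show "Calls \<union> Rets \<subseteq> visible" by blast
  show "visible \<subseteq> alpha HWQ \<inter> alpha AbsQ" by (auto simp: HWQ_def AbsQ_def)
  show "{u. \<exists>slot. hwq_sim (init HWQ) u slot} = {init AbsQ}"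
    using hwq_sim_init hwq_sim_init_unique by (auto simp: HWQ_def AbsQ_def)
next
  fix s g s' u
  assume "trans HWQ s g s' \<and> g \<in> visible \<and> (\<exists>slot. hwq_sim s u slot)"
  then obtain slot where sim: "hwq_sim s u slot" and step: "hwq_step s g s'" and "g \<in> visible"
    by auto
  then have "\<exists>u'. absq_step u g u' \<and> hwq_sim s' u' slot"
    using hwq_sim_InvEnq[OF sim] hwq_sim_InvDeq[OF sim] hwq_sim_RetEnq[OF sim] hwq_sim_RetDeq[OF sim]
      hwq_sim_LinDeq[OF sim]
    by (auto simp: Calls_def Rets_def LinDeqs_def)
  then obtain u' where "absq_step u g u'" "hwq_sim s' u' slot" by blast
  then show "\<exists>u' w1 w2. steps AbsQ u (w1 @ [g] @ w2) u' \<and> (\<exists>slot. hwq_sim s' u' slot) \<and>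
      set w1 \<subseteq> alpha AbsQ - visible \<and> set w2 \<subseteq> alpha AbsQ - visible"
    by (intro exI[of _ u'] exI[of _ "[]"]) (auto intro: steps_single)
next
  fix s e s' u
  assume "trans HWQ s e s' \<and> e \<notin> visible \<and> (\<exists>slot. hwq_sim s u slot)"
  then obtain slot where sim: "hwq_sim s u slot" and step: "hwq_step s e s'" and "e \<notin> visible"
    by auto
  then have "e = Tau" by (cases e) (auto simp: Calls_def Rets_def LinDeqs_def)
  then obtain slot' where "hwq_sim s' u slot'" using hwq_sim_Tau[OF sim] step by blast
  then show "\<exists>u' w. steps AbsQ u w u' \<and> (\<exists>slot. hwq_sim s' u' slot) \<and> set w \<subseteq> alpha AbsQ - visible"
    by (intro exI[of _ u] exI[of _ "[]"]) (auto intro: steps.steps_nil)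
qed

lemma hwq_proj_traces_no_LinDeq_EMPTY:
  assumes "x \<in> proj_traces HWQ G"
  shows "LinDeq EMPTY k \<notin> set x"
proof -
  have "LinDeq EMPTY k \<notin> set w" if "steps HWQ s w s'" for s w s'
    using that by (induction rule: steps.induct) auto
  then show ?thesis using assms unfolding proj_traces_def traces_def proj_def by auto
qed

definition absq_wf :: "aqstate \<Rightarrow> bool" where
  "absq_wf u \<longleftrightarrow>
     (\<forall>a b. (a, b) \<in> aord u \<longrightarrow> a \<in> aO u \<and> b \<in> aO u \<and> (\<exists>v. alab u a = Some (v, COMP))) \<and>
     (\<forall>k\<in>aO u. alab u k \<noteq> None) \<and> (\<forall>k\<in>aO u. acp u k = Some A1 \<or> acp u k = Some A2) \<and>
     (\<forall>k\<in>aO u. acp u k = Some A2 \<longrightarrow> (\<exists>v. alab u k = Some (v, COMP)))"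

definition preds_listed_before :: "nat list \<Rightarrow> (nat \<times> nat) set \<Rightarrow> bool" where
  "preds_listed_before L r \<longleftrightarrow> (\<forall>l1 b l2 a. L = l1 @ b # l2 \<longrightarrow> (a, b) \<in> r \<longrightarrow> a \<in> set l1)"

text \<open>\<open>L\<close> lists completed enqueues in the order of their returns.  It respects the partial order
  because an enqueue is only ever ordered after enqueues that returned before its invocation.\<close>

definition completion_log :: "aqstate \<Rightarrow> nat list \<Rightarrow> bool" where
  "completion_log u L \<longleftrightarrow> distinct L \<and> (\<forall>k\<in>set L. acp u k = Some A2) \<and>
     (\<forall>k\<in>aO u. (\<exists>v. alab u k = Some (v, COMP)) \<longrightarrow> k \<in> set L) \<and> preds_listed_before L (aord u)"

lemma preds_listed_before_mono: "preds_listed_before L r \<Longrightarrow> r' \<subseteq> r \<Longrightarrow> preds_listed_before L r'"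
  unfolding preds_listed_before_def by blast

lemma filter_eq_append_ConsD:
  "filter P xs = l1 @ b # l2 \<Longrightarrow> \<exists>m1 m2. xs = m1 @ b # m2 \<and> filter P m1 = l1"
proof (induction xs arbitrary: l1)
  case Nil then show ?case by simp
next
  case (Cons x xs)
  show ?case
  proof (cases "P x")
    case True
    show ?thesis
    proof (cases l1)
      case Nil then show ?thesis using Cons.prems True by (intro exI[of _ "[]"] exI[of _ xs]) auto
    next
      case (Cons y l1')
      then have "x = y" "filter P xs = l1' @ b # l2" using Cons.prems True by auto
      then obtain m1 m2 where "xs = m1 @ b # m2" "filter P m1 = l1'" using Cons.IH by blast
      then show ?thesis using True \<open>x = y\<close> Cons by (intro exI[of _ "x # m1"] exI[of _ m2]) auto
    qed
  next
    case False
    then have "filter P xs = l1 @ b # l2" using Cons.prems by simp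
    then obtain m1 m2 where "xs = m1 @ b # m2" "filter P m1 = l1" using Cons.IH by blast
    then show ?thesis using False by (intro exI[of _ "x # m1"] exI[of _ m2]) auto
  qed
qed

lemma preds_listed_before_filter:
  assumes "preds_listed_before L r" "\<forall>(a, b) \<in> r. P a"
  shows "preds_listed_before (filter P L) r"
  unfolding preds_listed_before_def
proof (intro allI impI)
  fix l1 b l2 a assume split: "filter P L = l1 @ b # l2" and ab: "(a, b) \<in> r"
  obtain m1 m2 where "L = m1 @ b # m2" "filter P m1 = l1"
    using filter_eq_append_ConsD[OF split] by blast
  then show "a \<in> set l1" using assms ab unfolding preds_listed_before_def by fastforce
qed

lemma preds_listed_before_Cons:
  "preds_listed_before (x # L) r \<longleftrightarrow> (\<forall>a. (a, x) \<notin> r) \<and> preds_listed_before L {(a, b) \<in> r. a \<noteq> x}"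
proof
  assume hyp: "preds_listed_before (x # L) r"
  have "(a, x) \<notin> r" for a
    using hyp unfolding preds_listed_before_def by (metis append_Nil empty_iff empty_set)
  moreover have "preds_listed_before L {(a, b) \<in> r. a \<noteq> x}"
    unfolding preds_listed_before_def
  proof (intro allI impI)
    fix l1 b l2 a assume "L = l1 @ b # l2" "(a, b) \<in> {(a, b) \<in> r. a \<noteq> x}"
    then show "a \<in> set l1"
      using hyp[unfolded preds_listed_before_def, rule_format, of "x # l1" b l2 a] by auto
  qed
  ultimately show "(\<forall>a. (a, x) \<notin> r) \<and> preds_listed_before L {(a, b) \<in> r. a \<noteq> x}" by blast
next
  assume hyp: "(\<forall>a. (a, x) \<notin> r) \<and> preds_listed_before L {(a, b) \<in> r. a \<noteq> x}"
  show "preds_listed_before (x # L) r"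
    unfolding preds_listed_before_def
  proof (intro allI impI)
    fix l1 b l2 a assume split: "x # L = l1 @ b # l2" and ab: "(a, b) \<in> r"
    show "a \<in> set l1"
    proof (cases l1)
      case Nil
      then show ?thesis using split ab hyp by auto
    next
      case (Cons c l1')
      then have "L = l1' @ b # l2" "c = x" using split by auto
      then show ?thesis using hyp ab Cons unfolding preds_listed_before_def by (cases "a = x") auto
    qed
  qed
qed

lemma snoc_eq_append_Cons:
  assumes "L @ [c] = l1 @ b # l2"
  shows "(l1 = L \<and> b = c) \<or> (\<exists>l2'. L = l1 @ b # l2')"
proof (cases l2 rule: rev_exhaust)
  case Nil then show ?thesis using assms by simp
next
  case (snoc ys y) then show ?thesis using assms by (metis append.assoc append_Cons append1_eq_conv)
qed

lemma absq_wf_not_member: "absq_wf u \<Longrightarrow> acp u k \<noteq> Some A1 \<Longrightarrow> acp u k \<noteq> Some A2 \<Longrightarrow> k \<notin> aO u"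
  unfolding absq_wf_def by blast

lemma absq_wf_step:
  assumes step: "absq_step u a u1" and wf: "absq_wf u"
  shows "absq_wf u1"
proof (cases a)
  case (InvEnq d k)
  then have "k \<notin> aO u" using step absq_wf_not_member[OF wf] by auto
  then show ?thesis using step wf InvEnq by (auto simp: absq_wf_def split: if_splits)
next
  case (InvDeq k)
  then have "k \<notin> aO u" using step absq_wf_not_member[OF wf] by auto
  then show ?thesis using step wf InvDeq by (auto simp: absq_wf_def split: if_splits)
next
  case (RetDeq d k)
  then have "k \<notin> aO u" using step absq_wf_not_member[OF wf] by auto
  then show ?thesis using step wf RetDeq by (auto simp: absq_wf_def split: if_splits)
next
  case (LinDeq d k)
  then have "k \<notin> aO u" using step absq_wf_not_member[OF wf] by auto
  then show ?thesis using step wf LinDeq by (auto simp: absq_wf_def split: if_splits)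
qed (use step wf in \<open>auto simp: absq_wf_def\<close>)

lemma completion_log_RetEnq:
  assumes step: "absq_step u (RetEnq k) u1" and wf: "absq_wf u" and log: "completion_log u L"
  shows "completion_log u1 (L @ [k])"
proof -
  from step have acp: "acp u k = Some A1" and u1: "u1 = u\<lparr>alab := (if k \<in> aO u
      then (alab u)(k \<mapsto> (fst (the (alab u k)), COMP)) else alab u), acp := (acp u)(k \<mapsto> A2)\<rparr>"
    by auto
  have "k \<notin> set L" using log acp unfolding completion_log_def by force
  moreover have "preds_listed_before (L @ [k]) (aord u1)"
    unfolding preds_listed_before_def
  proof (intro allI impI)
    fix l1 b l2 a assume split: "L @ [k] = l1 @ b # l2" and "(a, b) \<in> aord u1"
    then have ab: "(a, b) \<in> aord u" by (simp add: u1)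
    from snoc_eq_append_Cons[OF split] show "a \<in> set l1"
    proof
      assume "l1 = L \<and> b = k"
      then show ?thesis using ab wf log unfolding absq_wf_def completion_log_def by blast
    next
      assume "\<exists>l2'. L = l1 @ b # l2'"
      then show ?thesis using ab log unfolding completion_log_def preds_listed_before_def by blast
    qed
  qed
  ultimately show ?thesis using log unfolding completion_log_def u1 by auto
qed

lemma completion_log_step:
  assumes step: "absq_step u a u1" and wf: "absq_wf u" and log: "completion_log u L"
  shows "\<exists>L1. completion_log u1 L1"
proof (cases a)
  case (InvEnq d k)
  with step have "acp u k = None" by auto
  then have "k \<notin> aO u" "k \<notin> set L"
    using absq_wf_not_member[OF wf] log unfolding completion_log_def by auto
  then have "completion_log u1 L"
    using step log InvEnq unfolding completion_log_def preds_listed_before_def by (auto split: if_splits)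
  then show ?thesis ..
next
  case (RetEnq k)
  then show ?thesis using completion_log_RetEnq step wf log by blast
next
  case (LinDeq d k)
  with step have "acp u k = Some R1" by auto
  then have "k \<notin> set L" using log unfolding completion_log_def by force
  moreover have "preds_listed_before L (aord u1)"
    using step LinDeq log by (auto simp: completion_log_def elim!: preds_listed_before_mono)
  ultimately have "completion_log u1 L" using step LinDeq log unfolding completion_log_def by auto
  then show ?thesis ..
qed (use step log in \<open>auto simp: completion_log_def\<close>)

definition absq_inv :: "aqstate \<Rightarrow> bool" where
  "absq_inv u \<longleftrightarrow> absq_wf u \<and> (\<exists>L. completion_log u L)"

lemma absq_inv_init: "absq_inv absq_init"
  by (auto simp: absq_inv_def absq_wf_def completion_log_def absq_init_def preds_listed_before_def
      intro!: exI[of _ "[]"])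

lemma absq_inv_step: "absq_step u a u1 \<Longrightarrow> absq_inv u \<Longrightarrow> absq_inv u1"
  unfolding absq_inv_def using absq_wf_step completion_log_step by blast

lemma absq_inv_steps: "steps AbsQ u w u' \<Longrightarrow> absq_inv u \<Longrightarrow> absq_inv u'"
  by (induction rule: steps.induct) (auto intro: absq_inv_step)

definition labels_match :: "(nat \<Rightarrow> val) \<Rightarrow> aqstate \<Rightarrow> bool" where
  "labels_match V u \<longleftrightarrow> (\<forall>k\<in>aO u. \<exists>f. alab u k = Some (V k, f))"

lemma labels_match_step:
  assumes "absq_step u a u1" "labels_match V u" "\<And>d k. a = InvEnq d k \<Longrightarrow> V k = d"
  shows "labels_match V u1"
  using assms by (cases a) (auto simp: labels_match_def)

definition linearization :: "aqstate \<Rightarrow> nat list \<Rightarrow> bool" where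
  "linearization u ks \<longleftrightarrow> distinct ks \<and> set ks \<subseteq> aO u \<and>
     (\<forall>k\<in>aO u. (\<exists>v. alab u k = Some (v, COMP)) \<longrightarrow> k \<in> set ks) \<and> preds_listed_before ks (aord u)"

text \<open>The AbsQ0 state representing \<open>u\<close> when the members \<open>ks\<close> of \<open>O\<close> have been enqueued, oldest first,
  and \<open>V\<close> gives the value of every enqueue.  An enqueue still at \<open>A1\<close> in AbsQ counts as linearized
  once it is in \<open>ks\<close> or has left \<open>O\<close>, i.e.\ has been dequeued.\<close>

definition absq0_of :: "(nat \<Rightarrow> val) \<Rightarrow> aqstate \<Rightarrow> nat list \<Rightarrow> q0state" where
  "absq0_of V u ks =
     \<lparr>q = rev (map V ks),
      qin = (\<lambda>k. if acp u k = Some A1 \<or> acp u k = Some A2 then Some (V k) else None),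
      qrv = arv u,
      qcp = (\<lambda>k. if acp u k = Some A1 then (if k \<in> set ks \<or> k \<notin> aO u then Some A else Some A1)
                 else acp u k)\<rparr>"

lemma steps_LinEnq_map:
  "distinct js \<Longrightarrow> (\<forall>j\<in>set js. qcp u j = Some A1 \<and> qin u j = Some (V j)) \<Longrightarrow>
   steps AbsQ0 u (map (\<lambda>j. LinEnq (V j) j) js)
     (u\<lparr>q := rev (map V js) @ q u, qcp := (\<lambda>k. if k \<in> set js then Some A else qcp u k)\<rparr>)"
proof (induction js arbitrary: u)
  case Nil
  then show ?case by (simp add: steps.steps_nil)
next
  case (Cons j js)
  define u1 where "u1 = u\<lparr>q := V j # q u, qcp := (qcp u)(j \<mapsto> A)\<rparr>"
  have "absq0_step u (LinEnq (V j) j) u1" using Cons.prems unfolding u1_def by auto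
  moreover have "steps AbsQ0 u1 (map (\<lambda>j. LinEnq (V j) j) js)
     (u1\<lparr>q := rev (map V js) @ q u1, qcp := (\<lambda>k. if k \<in> set js then Some A else qcp u1 k)\<rparr>)"
    using Cons.prems by (intro Cons.IH) (auto simp: u1_def)
  moreover have "u1\<lparr>q := rev (map V js) @ q u1, qcp := (\<lambda>k. if k \<in> set js then Some A else qcp u1 k)\<rparr>
     = u\<lparr>q := rev (map V (j # js)) @ q u, qcp := (\<lambda>k. if k \<in> set (j # js) then Some A else qcp u k)\<rparr>"
    by (auto simp: u1_def fun_eq_iff)
  ultimately show ?case by (auto intro: steps.steps_cons)
qed

context
  fixes u d k u1 ks1 and V :: "nat \<Rightarrow> val"
  assumes step: "absq_step u (InvEnq d k) u1" and wf: "absq_wf u" and lin1: "linearization u1 ks1"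
    and V_k: "V k = d"
begin

lemma InvEnq_fresh: "acp u k = None" "k \<notin> aO u" "d \<noteq> EMPTY"
  using step absq_wf_not_member[OF wf] by auto

lemma InvEnq_result:
  "u1 = u\<lparr>aO := insert k (aO u),
          aord := aord u \<union> {(k'', k) | k'' v. k'' \<in> aO u \<and> alab u k'' = Some (v, COMP)},
          alab := (alab u)(k \<mapsto> (d, PEND)), acp := (acp u)(k \<mapsto> A1)\<rparr>"
  using step by auto

lemma InvEnq_completed_iff: "(\<exists>v. alab u1 j = Some (v, COMP)) \<longleftrightarrow> j \<noteq> k \<and> (\<exists>v. alab u j = Some (v, COMP))"
  unfolding InvEnq_result by auto

lemma InvEnq_completed_listed:
  assumes "j \<in> aO u" "\<exists>v. alab u j = Some (v, COMP)"
  shows "j \<in> set ks1"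
proof -
  have "j \<in> aO u1" "\<exists>v. alab u1 j = Some (v, COMP)"
    using assms InvEnq_fresh(2) InvEnq_completed_iff unfolding InvEnq_result by auto
  then show ?thesis using lin1 unfolding linearization_def by blast
qed

lemma backward_InvEnq_unlinearized:
  assumes "k \<notin> set ks1"
  shows "linearization u ks1" "absq0_step (absq0_of V u ks1) (InvEnq d k) (absq0_of V u1 ks1)"
proof -
  show "linearization u ks1"
    using lin1 assms InvEnq_completed_listed unfolding linearization_def InvEnq_result
    by (auto elim!: preds_listed_before_mono)
  show "absq0_step (absq0_of V u ks1) (InvEnq d k) (absq0_of V u1 ks1)"
    using InvEnq_fresh assms V_k unfolding InvEnq_result absq0_of_def by (auto simp: fun_eq_iff)
qed

text \<open>If the new enqueue is linearized in the successor, everything after it in \<open>ks1\<close> is pending: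
  a completed enqueue would be an order-predecessor of it and hence listed before it.\<close>

lemma InvEnq_linearized_suffix:
  assumes split: "ks1 = pre @ k # post"
  shows "\<forall>j\<in>set post. j \<in> aO u \<and> acp u j = Some A1 \<and> \<not> (\<exists>v. alab u j = Some (v, COMP))"
proof
  fix j assume j: "j \<in> set post"
  have "distinct ks1" "set ks1 \<subseteq> aO u1" "preds_listed_before ks1 (aord u1)"
    using lin1 unfolding linearization_def by auto
  then have "j \<in> aO u" "j \<notin> set pre" using j split unfolding InvEnq_result by auto
  moreover have "\<not> (\<exists>v. alab u j = Some (v, COMP))"
  proof
    assume "\<exists>v. alab u j = Some (v, COMP)"
    then have "(j, k) \<in> aord u1" using \<open>j \<in> aO u\<close> unfolding InvEnq_result by auto
    then show False
      using \<open>preds_listed_before ks1 (aord u1)\<close> split \<open>j \<notin> set pre\<close>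
      unfolding preds_listed_before_def by blast
  qed
  ultimately show "j \<in> aO u \<and> acp u j = Some A1 \<and> \<not> (\<exists>v. alab u j = Some (v, COMP))"
    using wf unfolding absq_wf_def by blast
qed

lemma backward_InvEnq_linearized_prefix:
  assumes split: "ks1 = pre @ k # post"
  shows "linearization u pre"
  unfolding linearization_def
proof (intro conjI)
  have lin: "distinct ks1" "set ks1 \<subseteq> aO u1" "preds_listed_before ks1 (aord u1)"
    "\<forall>j\<in>aO u1. (\<exists>v. alab u1 j = Some (v, COMP)) \<longrightarrow> j \<in> set ks1"
    using lin1 unfolding linearization_def by auto
  show "distinct pre" using lin(1) split by auto
  show "set pre \<subseteq> aO u" using lin(1,2) split unfolding InvEnq_result by auto
  show "\<forall>j\<in>aO u. (\<exists>v. alab u j = Some (v, COMP)) \<longrightarrow> j \<in> set pre"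
    using InvEnq_completed_listed split InvEnq_fresh(2) InvEnq_linearized_suffix[OF split] by fastforce
  show "preds_listed_before pre (aord u)"
    unfolding preds_listed_before_def
  proof (intro allI impI)
    fix l1 b l2 a assume "pre = l1 @ b # l2" "(a, b) \<in> aord u"
    then have "ks1 = l1 @ b # (l2 @ k # post)" "(a, b) \<in> aord u1" using split unfolding InvEnq_result by auto
    then show "a \<in> set l1" using lin(3) unfolding preds_listed_before_def by blast
  qed
qed

lemma backward_InvEnq_linearized_run:
  assumes split: "ks1 = pre @ k # post"
  shows "steps AbsQ0 (absq0_of V u pre) (InvEnq d k # map (\<lambda>j. LinEnq (V j) j) (k # post))
    (absq0_of V u1 ks1)"
proof -
  have dist: "distinct (k # post)" "k \<notin> set pre" "set pre \<inter> set post = {}"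
    using lin1 split unfolding linearization_def by auto
  note post = InvEnq_linearized_suffix[OF split]
  define u0 where "u0 = (absq0_of V u pre)\<lparr>qin := (qin (absq0_of V u pre))(k \<mapsto> d),
                                          qcp := (qcp (absq0_of V u pre))(k \<mapsto> A1)\<rparr>"
  have "absq0_step (absq0_of V u pre) (InvEnq d k) u0"
    using InvEnq_fresh unfolding u0_def absq0_of_def by auto
  moreover have "steps AbsQ0 u0 (map (\<lambda>j. LinEnq (V j) j) (k # post))
     (u0\<lparr>q := rev (map V (k # post)) @ q u0, qcp := (\<lambda>j. if j \<in> set (k # post) then Some A else qcp u0 j)\<rparr>)"
    using dist post InvEnq_fresh V_k by (intro steps_LinEnq_map) (auto simp: u0_def absq0_of_def)
  moreover have "u0\<lparr>q := rev (map V (k # post)) @ q u0,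
      qcp := (\<lambda>j. if j \<in> set (k # post) then Some A else qcp u0 j)\<rparr> = absq0_of V u1 ks1"
    using split dist post InvEnq_fresh V_k unfolding u0_def absq0_of_def InvEnq_result
    by (auto simp: fun_eq_iff)
  ultimately show ?thesis by (auto intro: steps.steps_cons)
qed

lemma backward_InvEnq:
  "\<exists>ks w0. linearization u ks \<and> steps AbsQ0 (absq0_of V u ks) w0 (absq0_of V u1 ks1) \<and>
     proj visible w0 = [InvEnq d k]"
proof (cases "k \<in> set ks1")
  case True
  then obtain pre post where split: "ks1 = pre @ k # post" by (meson split_list)
  have "proj visible (InvEnq d k # map (\<lambda>j. LinEnq (V j) j) (k # post)) = [InvEnq d k]"
    by (auto simp: proj_def filter_empty_conv Calls_def Rets_def LinDeqs_def)
  then show ?thesis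
    using backward_InvEnq_linearized_prefix[OF split] backward_InvEnq_linearized_run[OF split] by blast
next
  case False
  then show ?thesis using backward_InvEnq_unlinearized
    by (intro exI[of _ ks1] exI[of _ "[InvEnq d k]"]) (auto intro: steps_single simp: Calls_def)
qed

end

lemma backward_single:
  assumes "linearization u ks0" "absq0_step (absq0_of V u ks0) a (absq0_of V u1 ks1)"
  shows "\<exists>ks w0. linearization u ks \<and> steps AbsQ0 (absq0_of V u ks) w0 (absq0_of V u1 ks1) \<and>
    proj visible w0 = proj visible [a]"
  using assms by (intro exI[of _ ks0] exI[of _ "[a]"]) (auto intro: steps_single)

lemma backward_InvDeq:
  assumes "absq_step u (InvDeq k) u1" "absq_wf u" "linearization u1 ks1"
  shows "linearization u ks1 \<and> absq0_step (absq0_of V u ks1) (InvDeq k) (absq0_of V u1 ks1)"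
proof -
  have "k \<notin> aO u" using assms(1) absq_wf_not_member[OF assms(2)] by auto
  then show ?thesis using assms(1,3) by (auto simp: linearization_def absq0_of_def fun_eq_iff)
qed

lemma backward_RetEnq:
  assumes step: "absq_step u (RetEnq k) u1" and lin1: "linearization u1 ks1"
  shows "linearization u ks1 \<and> absq0_step (absq0_of V u ks1) (RetEnq k) (absq0_of V u1 ks1)"
proof -
  from step have acp: "acp u k = Some A1" and u1: "u1 = u\<lparr>alab := (if k \<in> aO u
      then (alab u)(k \<mapsto> (fst (the (alab u k)), COMP)) else alab u), acp := (acp u)(k \<mapsto> A2)\<rparr>"
    by auto
  have completed: "j \<in> set ks1" if "j \<in> aO u" "j = k \<or> (\<exists>v. alab u j = Some (v, COMP))" for j
    using lin1 that unfolding linearization_def u1 by auto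
  have "linearization u ks1"
    using lin1 completed unfolding linearization_def u1 by auto
  moreover have "absq0_step (absq0_of V u ks1) (RetEnq k) (absq0_of V u1 ks1)"
    using acp completed unfolding u1 absq0_of_def by (auto simp: fun_eq_iff)
  ultimately show ?thesis ..
qed

lemma backward_RetDeq:
  assumes "absq_step u (RetDeq d k) u1" "linearization u1 ks1"
  shows "linearization u ks1 \<and> absq0_step (absq0_of V u ks1) (RetDeq d k) (absq0_of V u1 ks1)"
  using assms by (auto simp: linearization_def absq0_of_def fun_eq_iff)

text \<open>The dequeued enqueue \<open>k'\<close> is order-minimal, so it may be put at the head of the queue.\<close>

lemma backward_LinDeq:
  assumes step: "absq_step u (LinDeq d k) u1" and "d \<noteq> EMPTY" and wf: "absq_wf u"
    and labels: "labels_match V u" and lin1: "linearization u1 ks1"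
  obtains k' where "linearization u (k' # ks1)"
    "absq0_step (absq0_of V u (k' # ks1)) (LinDeq d k) (absq0_of V u1 ks1)"
proof -
  from step \<open>d \<noteq> EMPTY\<close> obtain k' f where acp: "acp u k = Some R1" and k': "k' \<in> aO u"
    and minimal: "\<forall>k''\<in>aO u. (k'', k') \<notin> aord u" and label: "alab u k' = Some (d, f)"
    and u1: "u1 = u\<lparr>aO := aO u - {k'}, aord := {(a, b). (a, b) \<in> aord u \<and> a \<noteq> k' \<and> b \<noteq> k'},
                   alab := (alab u)(k' := None), arv := (arv u)(k \<mapsto> d), acp := (acp u)(k \<mapsto> R2)\<rparr>"
    by auto
  have "k \<notin> aO u" using acp absq_wf_not_member[OF wf] by auto
  have no_pred: "(a, k') \<notin> aord u" for a using minimal wf unfolding absq_wf_def by blast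
  then have "{(a, b) \<in> aord u. a \<noteq> k'} = aord u1" unfolding u1 by auto
  then have "linearization u (k' # ks1)"
    using lin1 k' no_pred unfolding linearization_def preds_listed_before_Cons by (auto simp: u1)
  moreover have "absq0_step (absq0_of V u (k' # ks1)) (LinDeq d k) (absq0_of V u1 ks1)"
  proof -
    have "V k' = d" using labels k' label unfolding labels_match_def by auto
    then have "q (absq0_of V u (k' # ks1)) = q (absq0_of V u1 ks1) @ [d]"
      unfolding absq0_of_def by simp
    moreover have "absq0_of V u1 ks1 = (absq0_of V u (k' # ks1))\<lparr>q := q (absq0_of V u1 ks1),
        qrv := (qrv (absq0_of V u (k' # ks1)))(k \<mapsto> d), qcp := (qcp (absq0_of V u (k' # ks1)))(k \<mapsto> R2)\<rparr>"
      using acp \<open>k \<notin> aO u\<close> k' unfolding absq0_of_def u1 by (auto simp: fun_eq_iff)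
    ultimately show ?thesis using acp by (auto simp: absq0_of_def)
  qed
  ultimately show ?thesis by (rule that)
qed

lemma backward_step:
  assumes step: "absq_step u a u1" and wf: "absq_wf u" and labels: "labels_match V u"
    and enq_value: "\<And>d k. a = InvEnq d k \<Longrightarrow> V k = d" and "\<forall>k. a \<noteq> LinDeq EMPTY k"
    and lin1: "linearization u1 ks1"
  shows "\<exists>ks w0. linearization u ks \<and> steps AbsQ0 (absq0_of V u ks) w0 (absq0_of V u1 ks1) \<and>
    proj visible w0 = proj visible [a]"
proof (cases a)
  case (InvEnq d k)
  then show ?thesis using backward_InvEnq[OF _ wf lin1] step enq_value by (simp add: Calls_def)
next
  case (InvDeq k)
  then show ?thesis using backward_InvDeq[OF _ wf lin1] step by (blast intro: backward_single)
next
  case (RetEnq k)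
  then show ?thesis using backward_RetEnq[OF _ lin1] step by (blast intro: backward_single)
next
  case (RetDeq d k)
  then show ?thesis using backward_RetDeq[OF _ lin1] step by (blast intro: backward_single)
next
  case (LinDeq d k)
  then have "d \<noteq> EMPTY" using assms(5) by auto
  from backward_LinDeq[OF step[unfolded LinDeq] this wf labels lin1]
  obtain k' where "linearization u (k' # ks1)"
    "absq0_step (absq0_of V u (k' # ks1)) (LinDeq d k) (absq0_of V u1 ks1)" .
  then show ?thesis unfolding LinDeq by (rule backward_single)
qed (use step in auto)

lemma backward_steps:
  "steps AbsQ u w u' \<Longrightarrow> absq_wf u \<Longrightarrow> labels_match V u \<Longrightarrow> (\<forall>d k. InvEnq d k \<in> set w \<longrightarrow> V k = d) \<Longrightarrow>
   (\<forall>k. LinDeq EMPTY k \<notin> set w) \<Longrightarrow> linearization u' ks' \<Longrightarrow>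
   \<exists>ks w0. linearization u ks \<and> steps AbsQ0 (absq0_of V u ks) w0 (absq0_of V u' ks') \<and>
     proj visible w0 = proj visible w"
proof (induction arbitrary: ks' rule: steps.induct)
  case (steps_nil u)
  then show ?case by (intro exI[of _ ks'] exI[of _ "[]"]) (auto intro: steps.steps_nil)
next
  case (steps_cons u a u1 w u')
  have step: "absq_step u a u1" using steps_cons.hyps(1) by simp
  have "absq_wf u1" using absq_wf_step[OF step steps_cons.prems(1)] .
  moreover have "labels_match V u1"
    using labels_match_step[OF step steps_cons.prems(2)] steps_cons.prems(3) by auto
  ultimately obtain ks1 w1 where lin1: "linearization u1 ks1"
    and run1: "steps AbsQ0 (absq0_of V u1 ks1) w1 (absq0_of V u' ks')" and proj1: "proj visible w1 = proj visible w"
    using steps_cons.IH steps_cons.prems(3-5) by force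
  obtain ks w0 where "linearization u ks" "steps AbsQ0 (absq0_of V u ks) w0 (absq0_of V u1 ks1)"
    "proj visible w0 = proj visible [a]"
    using backward_step[OF step steps_cons.prems(1,2) _ _ lin1] steps_cons.prems(3,4) by force
  with run1 proj1 show ?case by (intro exI[of _ ks] exI[of _ "w0 @ w1"]) (auto intro: steps_append)
qed

lemma linearization_exists:
  assumes "absq_inv u"
  shows "\<exists>ks. linearization u ks"
proof -
  from assms obtain L where wf: "absq_wf u" and log: "completion_log u L"
    unfolding absq_inv_def by blast
  have "\<forall>(a, b) \<in> aord u. a \<in> aO u" using wf unfolding absq_wf_def by blast
  then have "linearization u (filter (\<lambda>k. k \<in> aO u) L)"
    using log preds_listed_before_filter unfolding completion_log_def linearization_def by auto
  then show ?thesis ..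
qed

lemma InvEnq_notin_steps: "steps AbsQ u w u' \<Longrightarrow> acp u k \<noteq> None \<Longrightarrow> InvEnq d k \<notin> set w"
proof (induction rule: steps.induct)
  case (steps_cons u a u1 w u')
  then have "a \<noteq> InvEnq d k" "acp u1 k \<noteq> None" by (cases a; auto)+
  with steps_cons.IH show ?case by simp
qed simp

lemma InvEnq_value_unique:
  "steps AbsQ u w u' \<Longrightarrow> InvEnq d k \<in> set w \<Longrightarrow> InvEnq d' k \<in> set w \<Longrightarrow> d = d'"
proof (induction rule: steps.induct)
  case (steps_cons u a u1 w u')
  show ?case
  proof (cases "a = InvEnq d k \<or> a = InvEnq d' k")
    case True
    then have "acp u1 k \<noteq> None" using steps_cons.hyps(1) by auto
    then show ?thesis using InvEnq_notin_steps[OF steps_cons.hyps(2)] steps_cons.prems True by auto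
  next
    case False
    then show ?thesis using steps_cons.prems steps_cons.IH by auto
  qed
qed simp

lemma absq_steps_absq0:
  assumes run: "steps AbsQ absq_init w u'" and "\<forall>k. LinDeq EMPTY k \<notin> set w"
  shows "\<exists>w0 u0. steps AbsQ0 absq0_init w0 u0 \<and> proj visible w0 = proj visible w"
proof -
  define V where "V k = (SOME d. InvEnq d k \<in> set w)" for k
  have enq_value: "\<forall>d k. InvEnq d k \<in> set w \<longrightarrow> V k = d"
    unfolding V_def by (metis someI InvEnq_value_unique[OF run])
  have labels: "labels_match V absq_init" by (simp add: labels_match_def absq_init_def)
  have wf: "absq_wf absq_init" using absq_inv_init unfolding absq_inv_def ..
  obtain ks' where "linearization u' ks'"
    using linearization_exists[OF absq_inv_steps[OF run absq_inv_init]] ..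
  then obtain ks w0 where lin: "linearization absq_init ks"
    and run0: "steps AbsQ0 (absq0_of V absq_init ks) w0 (absq0_of V u' ks')" and "proj visible w0 = proj visible w"
    using backward_steps[OF run wf labels enq_value assms(2)] by blast
  moreover have "absq0_of V absq_init ks = absq0_init"
    using lin by (simp add: linearization_def absq0_of_def absq_init_def absq0_init_def)
  ultimately show ?thesis by auto
qed

lemma absq_proj_traces_absq0:
  assumes "x \<in> proj_traces AbsQ visible" "\<forall>k. LinDeq EMPTY k \<notin> set x"
  shows "x \<in> proj_traces AbsQ0 visible"
proof -
  obtain w u' where run: "steps AbsQ absq_init w u'" and x: "x = proj visible w"
    using assms(1) unfolding proj_traces_def traces_def by (auto simp: AbsQ_def)
  have "\<forall>k. LinDeq EMPTY k \<notin> set w"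
    using assms(2) unfolding x by (auto simp: proj_def LinDeqs_def)
  then obtain w0 u0 where "steps AbsQ0 absq0_init w0 u0" "proj visible w0 = x"
    using absq_steps_absq0[OF run] x by metis
  then show ?thesis unfolding proj_traces_def traces_def by (force simp: AbsQ0_def)
qed

theorem mainTheorem3:
  shows "(\<exists>fs. is_fwd_sim (Calls \<union> Rets \<union> LinDeqs) HWQ AbsQ fs)
       \<and> gamma_refines (Calls \<union> Rets \<union> LinDeqs) HWQ AbsQ0
       \<and> refines HWQ AbsQ0"
proof -
  note sim = hwq_is_fwd_sim
  have "gamma_refines visible HWQ AbsQ0"
    unfolding gamma_refines_def
  proof
    fix x assume x: "x \<in> proj_traces HWQ visible"
    then have "x \<in> proj_traces AbsQ visible"
      using is_fwd_sim_gamma_refines[OF sim] unfolding gamma_refines_def by blast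
    moreover have "\<forall>k. LinDeq EMPTY k \<notin> set x"
      using hwq_proj_traces_no_LinDeq_EMPTY[OF x] by blast
    ultimately show "x \<in> proj_traces AbsQ0 visible" by (rule absq_proj_traces_absq0)
  qed
  moreover have "Calls \<union> Rets \<subseteq> visible" by blast
  ultimately show ?thesis using sim gamma_refines_refines by blast
qed

end
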